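(* Let $a>0$ and $\epsilon\in[0,\tfrac12]$ be fixed with $a(\sqrt{1-\epsilon}-\sqrt\epsilon)^2<1$, and consider the binary censored block model with $p=a\log n/n$ in which $\sigma^*$ is chosen uniformly at random from $\{\pm1\}^n$. Then for any sequence of estimators $\widehat Y_n$ (functions of $A$), $\mathbb P\{\widehat Y_n=Y^*\}\to0$ as $n\to\infty$.
   Context: Binary censored block model: $G\sim\mathcal G(n,p)$ (Erdős–Rényi, independent of $\sigma^*$); each edge $(i,j)$ independently gets label $L_{ij}=\sigma^*_i\sigma^*_j$ with probability $1-\epsilon$ and $L_{ij}=-\sigma^*_i\sigma^*_j$ with probability $\epsilon$. $A$ is the symmetric weighted adjacency matrix with $A_{ij}=L_{ij}$ on edges and $0$ otherwise. $Y^*=\sigma^*(\sigma^* )^\top$. *)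

theory Defs
  imports "HOL-Analysis.Analysis"
begin

text \<open>Entry A i j = 0 means no edge;
  otherwise A i j is the (possibly flipped) label L_ij.\<close>

definition sign_vectors :: "nat \<Rightarrow> (nat \<Rightarrow> int) set" where
  "sign_vectors n = {\<sigma>. (\<forall>i<n. \<sigma> i = 1 \<or> \<sigma> i = -1) \<and> (\<forall>i\<ge>n. \<sigma> i = 1)}"

definition observations :: "nat \<Rightarrow> (nat \<Rightarrow> nat \<Rightarrow> int) set" where
  "observations n = {A. (\<forall>i j. A i j \<in> {-1, 0, 1}) \<and> (\<forall>i j. A i j = A j i)
      \<and> (\<forall>i. A i i = 0) \<and> (\<forall>i j. (n \<le> i \<or> n \<le> j) \<longrightarrow> A i j = 0)}"

definition pair_lik :: "real \<Rightarrow> real \<Rightarrow> int \<Rightarrow> int \<Rightarrow> real" where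
  "pair_lik p \<epsilon> s x =
     (if x = 0 then 1 - p else if x = s then p * (1 - \<epsilon>) else if x = - s then p * \<epsilon> else 0)"

definition cbm_lik :: "nat \<Rightarrow> real \<Rightarrow> real \<Rightarrow> (nat \<Rightarrow> int) \<Rightarrow> (nat \<Rightarrow> nat \<Rightarrow> int) \<Rightarrow> real" where
  "cbm_lik n p \<epsilon> \<sigma> A =
     (\<Prod>(i, j) \<in> {(i, j). i < j \<and> j < n}. pair_lik p \<epsilon> (\<sigma> i * \<sigma> j) (A i j))"

definition success_prob ::
  "nat \<Rightarrow> real \<Rightarrow> real \<Rightarrow> ((nat \<Rightarrow> nat \<Rightarrow> int) \<Rightarrow> (nat \<Rightarrow> nat \<Rightarrow> real)) \<Rightarrow> real" where
  "success_prob n p \<epsilon> Yhat =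
     (\<Sum>\<sigma> \<in> sign_vectors n. \<Sum>A \<in> observations n.
        (1 / 2 ^ n) * cbm_lik n p \<epsilon> \<sigma> A *
        (if (\<forall>i<n. \<forall>j<n. Yhat A i j = real_of_int (\<sigma> i * \<sigma> j)) then 1 else 0))"

end

theory Submission
  imports Defs "HOL-Real_Asymp.Real_Asymp"
begin

text \<open>Let \<open>m = n div M\<close> for a large constant \<open>M\<close> and \<open>k \<approx> a s ln n / 2\<close> with
  \<open>s = 2 sqrt(\<epsilon> (1 - \<epsilon>))\<close>, and call a vertex \<open>i < m\<close> balanced if its row has exactly \<open>2 k\<close>
  edges, all to vertices \<open>\<ge> m\<close>, exactly \<open>k\<close> of which carry a flipped label.  Flipping the sign
  of a balanced vertex changes neither the likelihood nor the set of balanced vertices, while a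
  fixed estimate recovers at most three of \<open>\<sigma>\<close> and its flips at balanced vertices.  Hence the
  success probability is at most \<open>3 E[1 / (1 + Z)]\<close>, where \<open>Z\<close> counts the balanced vertices.
  The rows of two vertices below \<open>m\<close> share only the absent edge between them, which gives
  \<open>E[Z\<^sup>2] \<le> E Z + (E Z)\<^sup>2 / (1 - p)\<close> and so \<open>E[1 / (1 + Z)] \<le> 6 / E Z + 4 p / (1 - p)\<close>.
  Finally \<open>E Z\<close> grows at least like \<open>n\<^bsup>(1 - \<beta>) / 2\<^esup>\<close> up to logarithmic factors, where
  \<open>\<beta> = a (sqrt(1 - \<epsilon>) - sqrt \<epsilon>)\<^sup>2 < 1\<close>.\<close>

section \<open>Independence of the observed entries\<close>

definition upper_pairs :: "nat \<Rightarrow> (nat \<times> nat) set" where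
  "upper_pairs n = {(i, j). i < j \<and> j < n}"

definition edge_values :: "int set" where
  "edge_values = {-1, 0, 1}"

definition symmetrize :: "nat \<Rightarrow> (nat \<times> nat \<Rightarrow> int) \<Rightarrow> nat \<Rightarrow> nat \<Rightarrow> int" where
  "symmetrize n x i j =
     (if (i, j) \<in> upper_pairs n then x (i, j) else if (j, i) \<in> upper_pairs n then x (j, i) else 0)"

definition cbm_expect ::
  "nat \<Rightarrow> real \<Rightarrow> real \<Rightarrow> (nat \<Rightarrow> int) \<Rightarrow> ((nat \<Rightarrow> nat \<Rightarrow> int) \<Rightarrow> real) \<Rightarrow> real" where
  "cbm_expect n p \<epsilon> \<sigma> h = (\<Sum>A\<in>observations n. cbm_lik n p \<epsilon> \<sigma> A * h A)"

lemma finite_upper_pairs [simp]: "finite (upper_pairs n)"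
  by (rule finite_subset[of _ "{..<n} \<times> {..<n}"]) (auto simp: upper_pairs_def)

lemma bij_betw_symmetrize:
  "bij_betw (symmetrize n) (PiE (upper_pairs n) (\<lambda>_. edge_values)) (observations n)"
proof (rule bij_betw_byWitness[where f' = "\<lambda>A. restrict (\<lambda>e. A (fst e) (snd e)) (upper_pairs n)"])
  show "\<forall>x\<in>PiE (upper_pairs n) (\<lambda>_. edge_values).
          restrict (\<lambda>e. symmetrize n x (fst e) (snd e)) (upper_pairs n) = x"
    by (auto simp: symmetrize_def PiE_def extensional_def fun_eq_iff)
  show "\<forall>A\<in>observations n. symmetrize n (restrict (\<lambda>e. A (fst e) (snd e)) (upper_pairs n)) = A"
  proof (intro ballI ext)
    fix A i j assume "A \<in> observations n"
    then show "symmetrize n (restrict (\<lambda>e. A (fst e) (snd e)) (upper_pairs n)) i j = A i j"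
      unfolding symmetrize_def observations_def upper_pairs_def
      by (cases i j rule: linorder_cases) auto
  qed
  show "symmetrize n ` PiE (upper_pairs n) (\<lambda>_. edge_values) \<subseteq> observations n"
  proof (rule image_subsetI)
    fix x assume x: "x \<in> PiE (upper_pairs n) (\<lambda>_. edge_values)"
    have "x e \<in> {-1, 0, 1}" if "e \<in> upper_pairs n" for e
      using x that by (auto simp: edge_values_def)
    then show "symmetrize n x \<in> observations n"
      unfolding observations_def by (auto simp: symmetrize_def upper_pairs_def)
  qed
  show "(\<lambda>A. restrict (\<lambda>e. A (fst e) (snd e)) (upper_pairs n)) ` observations n
          \<subseteq> PiE (upper_pairs n) (\<lambda>_. edge_values)"
  proof (rule image_subsetI)
    fix A assume "A \<in> observations n"
    then have "A i j \<in> edge_values" for i j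
      unfolding observations_def edge_values_def by blast
    then show "restrict (\<lambda>e. A (fst e) (snd e)) (upper_pairs n) \<in> PiE (upper_pairs n) (\<lambda>_. edge_values)"
      by auto
  qed
qed

lemma finite_observations [simp]: "finite (observations n)"
proof -
  have "finite (PiE (upper_pairs n) (\<lambda>_. edge_values))"
    by (intro finite_PiE) (auto simp: edge_values_def)
  then show ?thesis
    using bij_betw_finite[OF bij_betw_symmetrize] by blast
qed

lemma cbm_lik_upper_pairs:
  "cbm_lik n p \<epsilon> \<sigma> A =
     (\<Prod>e\<in>upper_pairs n. pair_lik p \<epsilon> (\<sigma> (fst e) * \<sigma> (snd e)) (A (fst e) (snd e)))"
  unfolding cbm_lik_def upper_pairs_def by (simp add: case_prod_unfold)

lemma cbm_expect_prod:
  assumes "\<And>A. A \<in> observations n \<Longrightarrow> h A = (\<Prod>e\<in>upper_pairs n. c e (A (fst e) (snd e)))"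
  shows "cbm_expect n p \<epsilon> \<sigma> h =
           (\<Prod>e\<in>upper_pairs n. \<Sum>v\<in>edge_values. pair_lik p \<epsilon> (\<sigma> (fst e) * \<sigma> (snd e)) v * c e v)"
proof -
  have entry: "symmetrize n x (fst e) (snd e) = x e" if "e \<in> upper_pairs n" for x e
    using that by (auto simp: symmetrize_def)
  have "cbm_expect n p \<epsilon> \<sigma> h =
      (\<Sum>x\<in>PiE (upper_pairs n) (\<lambda>_. edge_values). cbm_lik n p \<epsilon> \<sigma> (symmetrize n x) * h (symmetrize n x))"
    unfolding cbm_expect_def by (rule sum.reindex_bij_betw[OF bij_betw_symmetrize, symmetric])
  also have "\<dots> = (\<Sum>x\<in>PiE (upper_pairs n) (\<lambda>_. edge_values).
                     \<Prod>e\<in>upper_pairs n. pair_lik p \<epsilon> (\<sigma> (fst e) * \<sigma> (snd e)) (x e) * c e (x e))"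
  proof (intro sum.cong refl)
    fix x assume "x \<in> PiE (upper_pairs n) (\<lambda>_. edge_values)"
    then have "symmetrize n x \<in> observations n"
      by (rule bij_betw_apply[OF bij_betw_symmetrize])
    then show "cbm_lik n p \<epsilon> \<sigma> (symmetrize n x) * h (symmetrize n x) =
        (\<Prod>e\<in>upper_pairs n. pair_lik p \<epsilon> (\<sigma> (fst e) * \<sigma> (snd e)) (x e) * c e (x e))"
      by (simp add: assms cbm_lik_upper_pairs prod.distrib entry cong: prod.cong)
  qed
  also have "\<dots> = (\<Prod>e\<in>upper_pairs n. \<Sum>v\<in>edge_values. pair_lik p \<epsilon> (\<sigma> (fst e) * \<sigma> (snd e)) v * c e v)"
    by (rule prod_sum_PiE[symmetric]) (auto simp: edge_values_def)
  finally show ?thesis .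
qed

lemma sign_vectors_mult_cases:
  "\<sigma> \<in> sign_vectors n \<Longrightarrow> i < n \<Longrightarrow> j < n \<Longrightarrow> \<sigma> i * \<sigma> j = 1 \<or> \<sigma> i * \<sigma> j = -1"
proof -
  assume "\<sigma> \<in> sign_vectors n" "i < n" "j < n"
  then have "\<sigma> i = 1 \<or> \<sigma> i = -1" "\<sigma> j = 1 \<or> \<sigma> j = -1"
    by (auto simp: sign_vectors_def)
  then show ?thesis by auto
qed

lemma sum_pair_lik: "s = 1 \<or> s = -1 \<Longrightarrow> (\<Sum>v\<in>edge_values. pair_lik p \<epsilon> s v) = 1"
  by (auto simp: edge_values_def pair_lik_def algebra_simps)

lemma pair_lik_nonneg: "0 \<le> p \<Longrightarrow> p \<le> 1 \<Longrightarrow> 0 \<le> \<epsilon> \<Longrightarrow> \<epsilon> \<le> 1 \<Longrightarrow> 0 \<le> pair_lik p \<epsilon> s v"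
  by (auto simp: pair_lik_def)

lemma pair_lik_same: "s = 1 \<or> s = -1 \<Longrightarrow> pair_lik p \<epsilon> s s = p * (1 - \<epsilon>)"
  by (auto simp: pair_lik_def)

lemma pair_lik_flipped: "s = 1 \<or> s = -1 \<Longrightarrow> pair_lik p \<epsilon> s (- s) = p * \<epsilon>"
  by (auto simp: pair_lik_def)

lemma pair_lik_uminus: "s = 1 \<or> s = -1 \<Longrightarrow> pair_lik p \<epsilon> (- s) x = pair_lik p \<epsilon> s (- x)"
  by (auto simp: pair_lik_def)

lemma cbm_lik_nonneg: "0 \<le> p \<Longrightarrow> p \<le> 1 \<Longrightarrow> 0 \<le> \<epsilon> \<Longrightarrow> \<epsilon> \<le> 1 \<Longrightarrow> 0 \<le> cbm_lik n p \<epsilon> \<sigma> A"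
  unfolding cbm_lik_def by (intro prod_nonneg) (auto intro: pair_lik_nonneg)

lemma cbm_expect_one:
  assumes "\<sigma> \<in> sign_vectors n"
  shows "cbm_expect n p \<epsilon> \<sigma> (\<lambda>_. 1) = 1"
proof -
  have "cbm_expect n p \<epsilon> \<sigma> (\<lambda>_. 1) =
      (\<Prod>e\<in>upper_pairs n. \<Sum>v\<in>edge_values. pair_lik p \<epsilon> (\<sigma> (fst e) * \<sigma> (snd e)) v * 1)"
    by (rule cbm_expect_prod) simp
  also have "\<dots> = 1"
    using sum_pair_lik sign_vectors_mult_cases[OF assms]
    by (intro prod.neutral) (auto simp: upper_pairs_def)
  finally show ?thesis .
qed

lemma cbm_expect_linear:
  "cbm_expect n p \<epsilon> \<sigma> (\<lambda>A. a * f A + b * g A + c) =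
     a * cbm_expect n p \<epsilon> \<sigma> f + b * cbm_expect n p \<epsilon> \<sigma> g + c * cbm_expect n p \<epsilon> \<sigma> (\<lambda>_. 1)"
  unfolding cbm_expect_def by (simp add: algebra_simps sum.distrib sum_distrib_left)

lemma cbm_expect_sum:
  "finite S \<Longrightarrow> cbm_expect n p \<epsilon> \<sigma> (\<lambda>A. \<Sum>x\<in>S. f x A) = (\<Sum>x\<in>S. cbm_expect n p \<epsilon> \<sigma> (f x))"
  unfolding cbm_expect_def by (simp add: sum_distrib_left sum.swap[of _ S])

lemma cbm_expect_mono:
  assumes "0 \<le> p" "p \<le> 1" "0 \<le> \<epsilon>" "\<epsilon> \<le> 1" "\<And>A. A \<in> observations n \<Longrightarrow> f A \<le> g A"
  shows "cbm_expect n p \<epsilon> \<sigma> f \<le> cbm_expect n p \<epsilon> \<sigma> g"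
  unfolding cbm_expect_def using assms by (intro sum_mono mult_left_mono cbm_lik_nonneg) auto

lemma prod_of_bool: "finite S \<Longrightarrow> (\<Prod>x\<in>S. (of_bool (P x) :: real)) = of_bool (\<forall>x\<in>S. P x)"
  by (induction S rule: finite_induct) auto

lemma star_upper_pairs:
  assumes "i < n"
  shows "{e \<in> upper_pairs n. fst e = i \<or> snd e = i} = (\<lambda>j. (min i j, max i j)) ` ({..<n} - {i})"
proof (intro equalityI subsetI)
  fix e assume "e \<in> {e \<in> upper_pairs n. fst e = i \<or> snd e = i}"
  then obtain a b where "e = (a, b)" "a < b" "b < n" "a = i \<or> b = i"
    by (auto simp: upper_pairs_def)
  then show "e \<in> (\<lambda>j. (min i j, max i j)) ` ({..<n} - {i})"
    by (cases "a = i") (auto intro: image_eqI[of _ _ a] image_eqI[of _ _ b])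
next
  fix e assume "e \<in> (\<lambda>j. (min i j, max i j)) ` ({..<n} - {i})"
  then obtain j where "j < n" "j \<noteq> i" "e = (min i j, max i j)" by auto
  with assms show "e \<in> {e \<in> upper_pairs n. fst e = i \<or> snd e = i}"
    by (cases "i < j") (auto simp: upper_pairs_def)
qed

lemma prod_upper_pairs_split:
  assumes "i < n"
  shows "(\<Prod>e\<in>upper_pairs n. h e) =
           (\<Prod>j\<in>{..<n} - {i}. h (min i j, max i j)) *
           (\<Prod>e\<in>{e \<in> upper_pairs n. fst e \<noteq> i \<and> snd e \<noteq> i}. h e)"
proof -
  have inj: "inj_on (\<lambda>j. (min i j, max i j)) ({..<n} - {i})"
    by (auto simp: inj_on_def min_def max_def split: if_splits)
  have "upper_pairs n =
      {e \<in> upper_pairs n. fst e = i \<or> snd e = i} \<union> {e \<in> upper_pairs n. fst e \<noteq> i \<and> snd e \<noteq> i}"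
    by auto
  then have "(\<Prod>e\<in>upper_pairs n. h e) =
      (\<Prod>e\<in>{e \<in> upper_pairs n. fst e = i \<or> snd e = i}. h e) *
      (\<Prod>e\<in>{e \<in> upper_pairs n. fst e \<noteq> i \<and> snd e \<noteq> i}. h e)"
    by (subst prod.union_disjoint[symmetric]) auto
  then show ?thesis
    by (simp add: star_upper_pairs[OF assms] prod.reindex[OF inj])
qed

section \<open>Rows with a prescribed pattern\<close>

text \<open>For \<open>card F = card (D - F)\<close> such a row is equally likely under \<open>\<sigma>\<close> and under \<open>\<sigma>\<close> with
  the sign of \<open>i\<close> flipped.\<close>
definition row_pattern :: "(nat \<Rightarrow> int) \<Rightarrow> nat \<Rightarrow> nat set \<Rightarrow> nat set \<Rightarrow> nat \<Rightarrow> int" where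
  "row_pattern \<sigma> i D F j = (if j \<in> D then if j \<in> F then - (\<sigma> i * \<sigma> j) else \<sigma> i * \<sigma> j else 0)"

definition has_row_pattern ::
  "nat \<Rightarrow> (nat \<Rightarrow> int) \<Rightarrow> (nat \<Rightarrow> nat \<Rightarrow> int) \<Rightarrow> nat \<Rightarrow> nat set \<Rightarrow> nat set \<Rightarrow> bool" where
  "has_row_pattern n \<sigma> A i D F \<longleftrightarrow> (\<forall>j<n. j \<noteq> i \<longrightarrow> A i j = row_pattern \<sigma> i D F j)"

definition pattern_factor :: "(nat \<Rightarrow> int) \<Rightarrow> nat \<Rightarrow> nat set \<Rightarrow> nat set \<Rightarrow> nat \<times> nat \<Rightarrow> int \<Rightarrow> real" where
  "pattern_factor \<sigma> i D F e v =
     of_bool (if fst e = i then v = row_pattern \<sigma> i D F (snd e)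
              else if snd e = i then v = row_pattern \<sigma> i D F (fst e) else True)"

lemma pattern_factor_off_star: "fst e \<noteq> i \<Longrightarrow> snd e \<noteq> i \<Longrightarrow> pattern_factor \<sigma> i D F e v = 1"
  by (simp add: pattern_factor_def)

lemma pattern_factor_star:
  "j \<noteq> i \<Longrightarrow> pattern_factor \<sigma> i D F (min i j, max i j) v = of_bool (v = row_pattern \<sigma> i D F j)"
  by (cases "i < j") (auto simp: pattern_factor_def)

lemma row_pattern_in_edge_values:
  "\<sigma> \<in> sign_vectors n \<Longrightarrow> i < n \<Longrightarrow> D \<subseteq> {..<n} \<Longrightarrow> row_pattern \<sigma> i D F j \<in> edge_values"
  using sign_vectors_mult_cases[of \<sigma> n i j] by (auto simp: row_pattern_def edge_values_def)

lemma has_row_pattern_prod: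
  assumes A: "A \<in> observations n" and i: "i < n"
  shows "of_bool (has_row_pattern n \<sigma> A i D F) =
           (\<Prod>e\<in>upper_pairs n. pattern_factor \<sigma> i D F e (A (fst e) (snd e)))"
proof -
  have sym: "A (min i j) (max i j) = A i j" for j
    using A by (cases "i \<le> j") (auto simp: observations_def min_def max_def)
  have "(\<Prod>e\<in>upper_pairs n. pattern_factor \<sigma> i D F e (A (fst e) (snd e))) =
      (\<Prod>j\<in>{..<n} - {i}. of_bool (A i j = row_pattern \<sigma> i D F j))"
    by (simp add: prod_upper_pairs_split[OF i] pattern_factor_off_star pattern_factor_star sym)
  also have "\<dots> = of_bool (has_row_pattern n \<sigma> A i D F)"
    by (auto simp: prod_of_bool has_row_pattern_def)
  finally show ?thesis ..
qed

lemma has_row_pattern_unique: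
  assumes \<sigma>: "\<sigma> \<in> sign_vectors n" and i: "i < n"
    and "has_row_pattern n \<sigma> A i D F" "D \<subseteq> {..<n} - {i}" "F \<subseteq> D"
    and "has_row_pattern n \<sigma> A i D' F'" "D' \<subseteq> {..<n} - {i}" "F' \<subseteq> D'"
  shows "D = D' \<and> F = F'"
proof -
  have recover: "D = {j. j < n \<and> j \<noteq> i \<and> A i j \<noteq> 0} \<and> F = {j. j < n \<and> j \<noteq> i \<and> A i j = - (\<sigma> i * \<sigma> j)}"
    if "has_row_pattern n \<sigma> A i D F" "D \<subseteq> {..<n} - {i}" "F \<subseteq> D" for D F
  proof -
    have row: "A i j = row_pattern \<sigma> i D F j \<and> (\<sigma> i * \<sigma> j = 1 \<or> \<sigma> i * \<sigma> j = -1)"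
      if "j < n" "j \<noteq> i" for j
      using that \<open>has_row_pattern n \<sigma> A i D F\<close> sign_vectors_mult_cases[OF \<sigma> i]
      by (auto simp: has_row_pattern_def)
    have "(j \<in> D \<longleftrightarrow> j < n \<and> j \<noteq> i \<and> A i j \<noteq> 0) \<and>
          (j \<in> F \<longleftrightarrow> j < n \<and> j \<noteq> i \<and> A i j = - (\<sigma> i * \<sigma> j))" for j
    proof (cases "j < n \<and> j \<noteq> i")
      case True
      with row[of j] \<open>F \<subseteq> D\<close> show ?thesis by (auto simp: row_pattern_def)
    next
      case False
      with \<open>D \<subseteq> {..<n} - {i}\<close> \<open>F \<subseteq> D\<close> show ?thesis by auto
    qed
    then show ?thesis by blast
  qed
  show ?thesis
    using recover[OF assms(3-5)] recover[OF assms(6-8)] by simp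
qed

lemma prod_pair_lik_row_pattern:
  assumes \<sigma>: "\<sigma> \<in> sign_vectors n" and i: "i < n" and D: "D \<subseteq> {..<n} - {i}" and F: "F \<subseteq> D"
  shows "(\<Prod>j\<in>{..<n} - {i}. pair_lik p \<epsilon> (\<sigma> i * \<sigma> j) (row_pattern \<sigma> i D F j)) =
           (p * \<epsilon>) ^ card F * (p * (1 - \<epsilon>)) ^ card (D - F) * (1 - p) ^ (n - 1 - card D)"
proof -
  let ?f = "\<lambda>j. pair_lik p \<epsilon> (\<sigma> i * \<sigma> j) (row_pattern \<sigma> i D F j)"
  have fin: "finite ({..<n} - {i})" by simp
  have finD: "finite D" using D finite_subset by blast
  have pm: "j \<in> D \<Longrightarrow> \<sigma> i * \<sigma> j = 1 \<or> \<sigma> i * \<sigma> j = -1" for j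
    using D sign_vectors_mult_cases[OF \<sigma> i] by blast
  have "(\<Prod>j\<in>{..<n} - {i}. ?f j) = (\<Prod>j\<in>{..<n} - {i} - D. ?f j) * (\<Prod>j\<in>D - F. ?f j) * (\<Prod>j\<in>F. ?f j)"
    using prod.subset_diff[OF D fin, of ?f] prod.subset_diff[OF F finD, of ?f] by simp
  also have "\<dots> = (1 - p) ^ card ({..<n} - {i} - D) * (p * (1 - \<epsilon>)) ^ card (D - F) * (p * \<epsilon>) ^ card F"
  proof -
    have "(\<Prod>j\<in>{..<n} - {i} - D. ?f j) = (\<Prod>j\<in>{..<n} - {i} - D. 1 - p)"
      by (intro prod.cong) (auto simp: row_pattern_def pair_lik_def)
    moreover have "(\<Prod>j\<in>D - F. ?f j) = (\<Prod>j\<in>D - F. p * (1 - \<epsilon>))"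
      using pm by (intro prod.cong refl) (simp add: row_pattern_def pair_lik_same)
    moreover have "(\<Prod>j\<in>F. ?f j) = (\<Prod>j\<in>F. p * \<epsilon>)"
      using pm F by (intro prod.cong refl) (auto simp: row_pattern_def pair_lik_flipped)
    ultimately show ?thesis by simp
  qed
  also have "card ({..<n} - {i} - D) = n - 1 - card D"
    using D i by (simp add: card_Diff_subset finD)
  finally show ?thesis by (simp add: mult_ac)
qed

lemma sum_edge_values_of_bool: "t \<in> edge_values \<Longrightarrow> (\<Sum>v\<in>edge_values. f v * of_bool (v = t)) = (f t :: real)"
  by (auto simp: edge_values_def)

lemma sum_pattern_factor_off_star:
  assumes "\<sigma> \<in> sign_vectors n" "e \<in> upper_pairs n" "fst e \<noteq> i" "snd e \<noteq> i"
  shows "(\<Sum>v\<in>edge_values. pair_lik p \<epsilon> (\<sigma> (fst e) * \<sigma> (snd e)) v * pattern_factor \<sigma> i D F e v) = 1"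
  using assms sign_vectors_mult_cases[OF assms(1)]
  by (simp add: pattern_factor_off_star sum_pair_lik upper_pairs_def case_prod_unfold)

lemma sum_pattern_factor_star:
  assumes "\<sigma> \<in> sign_vectors n" "i < n" "D \<subseteq> {..<n}" "j \<noteq> i"
  shows "(\<Sum>v\<in>edge_values. pair_lik p \<epsilon> (\<sigma> (min i j) * \<sigma> (max i j)) v * pattern_factor \<sigma> i D F (min i j, max i j) v)
           = pair_lik p \<epsilon> (\<sigma> i * \<sigma> j) (row_pattern \<sigma> i D F j)"
proof -
  have "\<sigma> (min i j) * \<sigma> (max i j) = \<sigma> i * \<sigma> j"
    by (cases "i \<le> j") (auto simp: min_def max_def)
  then show ?thesis
    using assms by (simp add: pattern_factor_star sum_edge_values_of_bool row_pattern_in_edge_values)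
qed

definition pattern_prob :: "nat \<Rightarrow> nat \<Rightarrow> real \<Rightarrow> real \<Rightarrow> real" where
  "pattern_prob n k p \<epsilon> = (p * \<epsilon>) ^ k * (p * (1 - \<epsilon>)) ^ k * (1 - p) ^ (n - 1 - 2 * k)"

lemma cbm_expect_row_pattern:
  assumes \<sigma>: "\<sigma> \<in> sign_vectors n" and i: "i < n" and D: "D \<subseteq> {..<n} - {i}" and F: "F \<subseteq> D"
    and "card D = 2 * k" "card F = k"
  shows "cbm_expect n p \<epsilon> \<sigma> (\<lambda>A. of_bool (has_row_pattern n \<sigma> A i D F)) = pattern_prob n k p \<epsilon>"
proof -
  let ?\<beta> = "\<lambda>e. \<Sum>v\<in>edge_values. pair_lik p \<epsilon> (\<sigma> (fst e) * \<sigma> (snd e)) v * pattern_factor \<sigma> i D F e v"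
  have "cbm_expect n p \<epsilon> \<sigma> (\<lambda>A. of_bool (has_row_pattern n \<sigma> A i D F)) = (\<Prod>e\<in>upper_pairs n. ?\<beta> e)"
    by (rule cbm_expect_prod) (rule has_row_pattern_prod[OF _ i])
  also have "\<dots> = (\<Prod>j\<in>{..<n} - {i}. pair_lik p \<epsilon> (\<sigma> i * \<sigma> j) (row_pattern \<sigma> i D F j))"
    using D by (simp add: prod_upper_pairs_split[OF i] sum_pattern_factor_star[OF \<sigma> i]
                          sum_pattern_factor_off_star[OF \<sigma>] subset_Diff_insert)
  also have "\<dots> = pattern_prob n k p \<epsilon>"
    using assms finite_subset[OF F] finite_subset[OF D]
    by (simp add: prod_pair_lik_row_pattern card_Diff_subset pattern_prob_def)
  finally show ?thesis .
qed

text \<open>Two patterns at distinct vertices \<open>i\<close>, \<open>j\<close> that both leave the edge \<open>{i, j}\<close> absent share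
  only that edge, so they are independent up to the factor \<open>1 - p\<close> counted twice.\<close>
lemma cbm_expect_row_pattern_pair:
  assumes \<sigma>: "\<sigma> \<in> sign_vectors n" and i: "i < n" and j: "j < n" and ij: "i \<noteq> j"
    and D: "D \<subseteq> {..<n}" "j \<notin> D" and D': "D' \<subseteq> {..<n}" "i \<notin> D'"
  shows "(1 - p) * cbm_expect n p \<epsilon> \<sigma> (\<lambda>A. of_bool (has_row_pattern n \<sigma> A i D F) * of_bool (has_row_pattern n \<sigma> A j D' F')) =
         cbm_expect n p \<epsilon> \<sigma> (\<lambda>A. of_bool (has_row_pattern n \<sigma> A i D F)) *
         cbm_expect n p \<epsilon> \<sigma> (\<lambda>A. of_bool (has_row_pattern n \<sigma> A j D' F'))"
proof -
  define \<mu> where "\<mu> e v = pair_lik p \<epsilon> (\<sigma> (fst e) * \<sigma> (snd e)) v" for e v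
  define \<alpha> where "\<alpha> e = (\<Sum>v\<in>edge_values. \<mu> e v * (pattern_factor \<sigma> i D F e v * pattern_factor \<sigma> j D' F' e v))" for e
  define \<beta> where "\<beta> e = (\<Sum>v\<in>edge_values. \<mu> e v * pattern_factor \<sigma> i D F e v)" for e
  define \<beta>' where "\<beta>' e = (\<Sum>v\<in>edge_values. \<mu> e v * pattern_factor \<sigma> j D' F' e v)" for e
  define e\<^sub>0 where "e\<^sub>0 = (min i j, max i j)"
  have e\<^sub>0: "e\<^sub>0 \<in> upper_pairs n"
    using i j ij by (auto simp: e\<^sub>0_def upper_pairs_def min_def max_def)
  have "pattern_factor \<sigma> i D F e\<^sub>0 v = of_bool (v = 0)" "pattern_factor \<sigma> j D' F' e\<^sub>0 v = of_bool (v = 0)" for v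
    using pattern_factor_star[OF ij[symmetric], of \<sigma> D F v] pattern_factor_star[OF ij, of \<sigma> D' F' v] D D'
    by (simp_all add: e\<^sub>0_def row_pattern_def min.commute max.commute)
  then have at_e\<^sub>0: "\<alpha> e\<^sub>0 = 1 - p" "\<beta> e\<^sub>0 = 1 - p" "\<beta>' e\<^sub>0 = 1 - p"
    by (simp_all add: \<alpha>_def \<beta>_def \<beta>'_def \<mu>_def edge_values_def pair_lik_def)
  have off_e\<^sub>0: "\<alpha> e = \<beta> e * \<beta>' e" if e: "e \<in> upper_pairs n - {e\<^sub>0}" for e
  proof -
    have "(fst e \<noteq> i \<and> snd e \<noteq> i) \<or> (fst e \<noteq> j \<and> snd e \<noteq> j)"
      using e ij by (cases e) (auto simp: e\<^sub>0_def upper_pairs_def min_def max_def)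
    then show ?thesis
      using e sum_pattern_factor_off_star[OF \<sigma>]
      by (auto simp: \<alpha>_def \<beta>_def \<beta>'_def \<mu>_def pattern_factor_off_star)
  qed
  have "(1 - p) * (\<Prod>e\<in>upper_pairs n. \<alpha> e) = (\<Prod>e\<in>upper_pairs n. \<beta> e) * (\<Prod>e\<in>upper_pairs n. \<beta>' e)"
    using off_e\<^sub>0 by (simp add: prod.remove[OF _ e\<^sub>0] at_e\<^sub>0 prod.distrib)
  moreover have "cbm_expect n p \<epsilon> \<sigma> (\<lambda>A. of_bool (has_row_pattern n \<sigma> A i D F) * of_bool (has_row_pattern n \<sigma> A j D' F'))
      = (\<Prod>e\<in>upper_pairs n. \<alpha> e)"
    unfolding \<alpha>_def \<mu>_def
    by (rule cbm_expect_prod) (simp add: has_row_pattern_prod[OF _ i] has_row_pattern_prod[OF _ j] prod.distrib)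
  moreover have "cbm_expect n p \<epsilon> \<sigma> (\<lambda>A. of_bool (has_row_pattern n \<sigma> A i D F)) = (\<Prod>e\<in>upper_pairs n. \<beta> e)"
    unfolding \<beta>_def \<mu>_def by (rule cbm_expect_prod) (rule has_row_pattern_prod[OF _ i])
  moreover have "cbm_expect n p \<epsilon> \<sigma> (\<lambda>A. of_bool (has_row_pattern n \<sigma> A j D' F')) = (\<Prod>e\<in>upper_pairs n. \<beta>' e)"
    unfolding \<beta>'_def \<mu>_def by (rule cbm_expect_prod) (rule has_row_pattern_prod[OF _ j])
  ultimately show ?thesis by simp
qed

section \<open>Moments of the number of balanced vertices\<close>

text \<open>The balanced patterns place all neighbours outside the first \<open>m\<close> vertices; hence patterns
  at two distinct vertices below \<open>m\<close> both leave the edge between them absent.\<close>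
definition balanced_patterns :: "nat \<Rightarrow> nat \<Rightarrow> nat \<Rightarrow> (nat set \<times> nat set) set" where
  "balanced_patterns n m k = {(D, F). D \<subseteq> {m..<n} \<and> card D = 2 * k \<and> F \<subseteq> D \<and> card F = k}"

definition balanced_count :: "nat \<Rightarrow> nat \<Rightarrow> nat \<Rightarrow> (nat \<Rightarrow> int) \<Rightarrow> (nat \<Rightarrow> nat \<Rightarrow> int) \<Rightarrow> real" where
  "balanced_count n m k \<sigma> A =
     (\<Sum>(i, D, F)\<in>{..<m} \<times> balanced_patterns n m k. of_bool (has_row_pattern n \<sigma> A i D F))"

lemma finite_balanced_patterns [simp]: "finite (balanced_patterns n m k)"
  by (rule finite_subset[of _ "Pow {m..<n} \<times> Pow {m..<n}"]) (auto simp: balanced_patterns_def)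

lemma balanced_count_nonneg: "0 \<le> balanced_count n m k \<sigma> A"
  unfolding balanced_count_def by (intro sum_nonneg) (auto split: prod.splits)

lemma card_balanced_patterns:
  "m \<le> n \<Longrightarrow> card (balanced_patterns n m k) = ((n - m) choose (2 * k)) * ((2 * k) choose k)"
proof -
  have "balanced_patterns n m k =
      (SIGMA D:{D. D \<subseteq> {m..<n} \<and> card D = 2 * k}. {F. F \<subseteq> D \<and> card F = k})"
    by (auto simp: balanced_patterns_def)
  also have "card \<dots> = (\<Sum>D\<in>{D. D \<subseteq> {m..<n} \<and> card D = 2 * k}. card {F. F \<subseteq> D \<and> card F = k})"
    by (rule card_SigmaI) (auto intro: finite_subset[of _ "Pow {m..<n}"])
  also have "\<dots> = (\<Sum>D\<in>{D. D \<subseteq> {m..<n} \<and> card D = 2 * k}. (2 * k) choose k)"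
  proof (intro sum.cong refl)
    fix D assume "D \<in> {D. D \<subseteq> {m..<n} \<and> card D = 2 * k}"
    then have "finite D" "card D = 2 * k" by (auto intro: finite_subset)
    then show "card {F. F \<subseteq> D \<and> card F = k} = (2 * k) choose k" by (simp add: n_subsets)
  qed
  also assume "m \<le> n"
  then have "(\<Sum>D\<in>{D. D \<subseteq> {m..<n} \<and> card D = 2 * k}. (2 * k) choose k) =
               ((n - m) choose (2 * k)) * ((2 * k) choose k)"
    by (simp add: n_subsets)
  finally show ?thesis .
qed

context
  fixes n m k :: nat and p \<epsilon> :: real and \<sigma> :: "nat \<Rightarrow> int"
  assumes p: "0 \<le> p" "p < 1" and \<epsilon>: "0 \<le> \<epsilon>" "\<epsilon> \<le> 1" and mn: "m \<le> n"
    and \<sigma>: "\<sigma> \<in> sign_vectors n"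
begin

lemma cbm_expect_balanced_pattern:
  "i < m \<Longrightarrow> (D, F) \<in> balanced_patterns n m k \<Longrightarrow>
     cbm_expect n p \<epsilon> \<sigma> (\<lambda>A. of_bool (has_row_pattern n \<sigma> A i D F)) = pattern_prob n k p \<epsilon>"
  using mn by (intro cbm_expect_row_pattern[OF \<sigma>]) (auto simp: balanced_patterns_def)

lemma cbm_expect_balanced_count:
  "cbm_expect n p \<epsilon> \<sigma> (balanced_count n m k \<sigma>) =
     real m * real (card (balanced_patterns n m k)) * pattern_prob n k p \<epsilon>"
proof -
  have "cbm_expect n p \<epsilon> \<sigma> (balanced_count n m k \<sigma>) =
      (\<Sum>(i, D, F)\<in>{..<m} \<times> balanced_patterns n m k. cbm_expect n p \<epsilon> \<sigma> (\<lambda>A. of_bool (has_row_pattern n \<sigma> A i D F)))"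
    unfolding balanced_count_def case_prod_unfold by (rule cbm_expect_sum) simp
  also have "\<dots> = (\<Sum>_\<in>{..<m} \<times> balanced_patterns n m k. pattern_prob n k p \<epsilon>)"
    by (intro sum.cong refl) (auto simp: cbm_expect_balanced_pattern)
  finally show ?thesis by (simp add: card_cartesian_product)
qed

lemma cbm_expect_balanced_pattern_pair_le:
  assumes "(i, D, F) \<in> {..<m} \<times> balanced_patterns n m k" "(j, D', F') \<in> {..<m} \<times> balanced_patterns n m k"
  shows "cbm_expect n p \<epsilon> \<sigma> (\<lambda>A. of_bool (has_row_pattern n \<sigma> A i D F) * of_bool (has_row_pattern n \<sigma> A j D' F'))
     \<le> of_bool ((i, D, F) = (j, D', F')) * pattern_prob n k p \<epsilon> + (pattern_prob n k p \<epsilon>)\<^sup>2 / (1 - p)"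
proof -
  have ij: "i < m" "j < m" and Q: "(D, F) \<in> balanced_patterns n m k" "(D', F') \<in> balanced_patterns n m k"
    using assms by auto
  then have DF: "D \<subseteq> {m..<n}" "F \<subseteq> D" "D' \<subseteq> {m..<n}" "F' \<subseteq> D'"
    by (auto simp: balanced_patterns_def)
  have w: "0 \<le> (pattern_prob n k p \<epsilon>)\<^sup>2 / (1 - p)" using p by simp
  consider "(i, D, F) = (j, D', F')" | "i = j" "(D, F) \<noteq> (D', F')" | "i \<noteq> j" by auto
  then show ?thesis
  proof cases
    case 1
    then show ?thesis
      using cbm_expect_balanced_pattern[OF ij(1) Q(1)] w by (simp add: of_bool_conj[symmetric])
  next
    case 2
    have "D \<subseteq> {..<n} - {i}" "D' \<subseteq> {..<n} - {i}" using DF ij mn by auto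
    then have "\<not> (has_row_pattern n \<sigma> A i D F \<and> has_row_pattern n \<sigma> A j D' F')" for A
      using has_row_pattern_unique[OF \<sigma>, of i A D F D' F'] 2 DF ij mn by auto
    then have "(\<lambda>A. of_bool (has_row_pattern n \<sigma> A i D F) * of_bool (has_row_pattern n \<sigma> A j D' F') :: real) = (\<lambda>_. 0)"
      by auto
    then have "cbm_expect n p \<epsilon> \<sigma> (\<lambda>A. of_bool (has_row_pattern n \<sigma> A i D F) * of_bool (has_row_pattern n \<sigma> A j D' F')) = 0"
      by (simp add: cbm_expect_def)
    then show ?thesis using 2 w by auto
  next
    case 3
    have "(1 - p) * cbm_expect n p \<epsilon> \<sigma> (\<lambda>A. of_bool (has_row_pattern n \<sigma> A i D F) * of_bool (has_row_pattern n \<sigma> A j D' F'))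
        = pattern_prob n k p \<epsilon> * pattern_prob n k p \<epsilon>"
      using cbm_expect_row_pattern_pair[OF \<sigma> _ _ 3, where D = D and D' = D' and F = F and F' = F'] DF ij mn
        cbm_expect_balanced_pattern[OF ij(1) Q(1)] cbm_expect_balanced_pattern[OF ij(2) Q(2)]
      by fastforce
    then show ?thesis using 3 p by (simp add: field_simps power2_eq_square)
  qed
qed

lemma cbm_expect_balanced_count_square:
  "cbm_expect n p \<epsilon> \<sigma> (\<lambda>A. (balanced_count n m k \<sigma> A)\<^sup>2) \<le>
     cbm_expect n p \<epsilon> \<sigma> (balanced_count n m k \<sigma>) + (cbm_expect n p \<epsilon> \<sigma> (balanced_count n m k \<sigma>))\<^sup>2 / (1 - p)"
proof -
  let ?S = "{..<m} \<times> balanced_patterns n m k"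
  let ?g = "\<lambda>(i, D, F) A. of_bool (has_row_pattern n \<sigma> A i D F) :: real"
  let ?w = "pattern_prob n k p \<epsilon>"
  have "cbm_expect n p \<epsilon> \<sigma> (\<lambda>A. (balanced_count n m k \<sigma> A)\<^sup>2) =
      cbm_expect n p \<epsilon> \<sigma> (\<lambda>A. \<Sum>a\<in>?S. \<Sum>b\<in>?S. ?g a A * ?g b A)"
    unfolding balanced_count_def power2_eq_square sum_product case_prod_unfold ..
  also have "\<dots> = (\<Sum>a\<in>?S. \<Sum>b\<in>?S. cbm_expect n p \<epsilon> \<sigma> (\<lambda>A. ?g a A * ?g b A))"
    by (simp add: cbm_expect_sum)
  also have "\<dots> \<le> (\<Sum>a\<in>?S. \<Sum>b\<in>?S. of_bool (a = b) * ?w + ?w\<^sup>2 / (1 - p))"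
  proof (intro sum_mono)
    fix a b assume "a \<in> ?S" "b \<in> ?S"
    moreover obtain i D F j D' F' where "a = (i, D, F)" "b = (j, D', F')"
      by (metis prod_cases3)
    ultimately show "cbm_expect n p \<epsilon> \<sigma> (\<lambda>A. ?g a A * ?g b A) \<le> of_bool (a = b) * ?w + ?w\<^sup>2 / (1 - p)"
      using cbm_expect_balanced_pattern_pair_le[of i D F j D' F'] by simp
  qed
  also have "\<dots> = real (card ?S) * ?w + (real (card ?S) * ?w)\<^sup>2 / (1 - p)"
  proof -
    have "(\<Sum>b\<in>?S. of_bool (a = b) * ?w) = ?w" if "a \<in> ?S" for a
    proof -
      have "?S \<inter> {b. a = b} = {a}" using that by auto
      then show ?thesis by simp
    qed
    then have "(\<Sum>a\<in>?S. \<Sum>b\<in>?S. of_bool (a = b) * ?w + ?w\<^sup>2 / (1 - p)) =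
        real (card ?S) * (?w + real (card ?S) * (?w\<^sup>2 / (1 - p)))"
      by (simp add: sum.distrib)
    also have "\<dots> = real (card ?S) * ?w + (real (card ?S) * ?w)\<^sup>2 / (1 - p)"
      using p by (simp add: field_simps power2_eq_square)
    finally show ?thesis .
  qed
  finally show ?thesis by (simp add: cbm_expect_balanced_count card_cartesian_product)
qed

end

lemma inverse_one_plus_le_quadratic:
  fixes z \<mu> :: real
  assumes "0 \<le> z" "0 < \<mu>"
  shows "1 / (1 + z) \<le> 4 * (z - \<mu>)\<^sup>2 / \<mu>\<^sup>2 + 2 / \<mu>"
proof (cases "z \<ge> \<mu> / 2")
  case True
  then have "1 / (1 + z) \<le> 2 / \<mu>" using assms by (simp add: field_simps)
  then show ?thesis by (smt (verit) divide_nonneg_nonneg zero_le_power2)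
next
  case False
  then have "(\<mu> / 2)\<^sup>2 \<le> (\<mu> - z)\<^sup>2" using assms by (intro power_mono) auto
  then have "1 \<le> 4 * (z - \<mu>)\<^sup>2 / \<mu>\<^sup>2" using assms by (simp add: field_simps power2_commute)
  moreover have "1 / (1 + z) \<le> 1" "0 \<le> 2 / \<mu>" using assms by simp_all
  ultimately show ?thesis by linarith
qed

lemma cbm_expect_inverse_one_plus_le:
  assumes \<sigma>: "\<sigma> \<in> sign_vectors n" and p: "0 \<le> p" "p < 1" and \<epsilon>: "0 \<le> \<epsilon>" "\<epsilon> \<le> 1"
    and Z: "\<And>A. 0 \<le> Z A" and \<mu>: "0 < cbm_expect n p \<epsilon> \<sigma> Z"
    and Z2: "cbm_expect n p \<epsilon> \<sigma> (\<lambda>A. (Z A)\<^sup>2) \<le> cbm_expect n p \<epsilon> \<sigma> Z + (cbm_expect n p \<epsilon> \<sigma> Z)\<^sup>2 / (1 - p)"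
  shows "cbm_expect n p \<epsilon> \<sigma> (\<lambda>A. 1 / (1 + Z A)) \<le> 6 / cbm_expect n p \<epsilon> \<sigma> Z + 4 * p / (1 - p)"
proof -
  define \<mu> where "\<mu> = cbm_expect n p \<epsilon> \<sigma> Z"
  have "cbm_expect n p \<epsilon> \<sigma> (\<lambda>A. 1 / (1 + Z A)) \<le>
      cbm_expect n p \<epsilon> \<sigma> (\<lambda>A. (4 / \<mu>\<^sup>2) * (Z A)\<^sup>2 + (- 8 / \<mu>) * Z A + (4 + 2 / \<mu>) * 1)"
  proof (intro cbm_expect_mono p(1) \<epsilon>)
    have "4 * (z - \<mu>)\<^sup>2 / \<mu>\<^sup>2 + 2 / \<mu> = (4 / \<mu>\<^sup>2) * z\<^sup>2 + (- 8 / \<mu>) * z + (4 + 2 / \<mu>) * 1" for z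
      using \<mu> by (simp add: \<mu>_def field_simps power2_eq_square)
    then show "1 / (1 + Z A) \<le> (4 / \<mu>\<^sup>2) * (Z A)\<^sup>2 + (- 8 / \<mu>) * Z A + (4 + 2 / \<mu>) * 1" for A
      using inverse_one_plus_le_quadratic[OF Z \<mu>[folded \<mu>_def], of A] by metis
  qed (use p in simp)
  also have "\<dots> = (4 / \<mu>\<^sup>2) * cbm_expect n p \<epsilon> \<sigma> (\<lambda>A. (Z A)\<^sup>2) + (- 8 / \<mu>) * \<mu> + (4 + 2 / \<mu>)"
    by (simp only: cbm_expect_linear cbm_expect_one[OF \<sigma>] \<mu>_def mult_1_right)
  also have "\<dots> \<le> (4 / \<mu>\<^sup>2) * (\<mu> + \<mu>\<^sup>2 / (1 - p)) + (- 8 / \<mu>) * \<mu> + (4 + 2 / \<mu>)"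
    using Z2 by (intro add_right_mono mult_left_mono) (auto simp: \<mu>_def)
  also have "\<dots> = 6 / \<mu> + 4 * p / (1 - p)"
    using \<mu> p by (simp add: \<mu>_def field_simps power2_eq_square)
  finally show ?thesis by (simp add: \<mu>_def)
qed

section \<open>Flipping a balanced vertex\<close>

definition flip :: "nat \<Rightarrow> (nat \<Rightarrow> int) \<Rightarrow> nat \<Rightarrow> int" where
  "flip i \<sigma> = \<sigma>(i := - \<sigma> i)"

lemma flip_flip [simp]: "flip i (flip i \<sigma>) = \<sigma>"
  by (simp add: flip_def)

lemma flip_in_sign_vectors: "\<sigma> \<in> sign_vectors n \<Longrightarrow> i < n \<Longrightarrow> flip i \<sigma> \<in> sign_vectors n"
  by (auto simp: sign_vectors_def flip_def)

definition balanced_vertices ::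
  "nat \<Rightarrow> nat \<Rightarrow> nat \<Rightarrow> (nat \<Rightarrow> int) \<Rightarrow> (nat \<Rightarrow> nat \<Rightarrow> int) \<Rightarrow> nat set" where
  "balanced_vertices n m k \<sigma> A =
     {i. i < m \<and> (\<exists>(D, F)\<in>balanced_patterns n m k. has_row_pattern n \<sigma> A i D F)}"

lemma balanced_pattern_subset:
  "(D, F) \<in> balanced_patterns n m k \<Longrightarrow> i < m \<Longrightarrow> m \<le> n \<Longrightarrow> D \<subseteq> {..<n} - {i} \<and> F \<subseteq> D"
  by (auto simp: balanced_patterns_def)

lemma balanced_count_eq_card:
  assumes \<sigma>: "\<sigma> \<in> sign_vectors n" and mn: "m \<le> n"
  shows "balanced_count n m k \<sigma> A = real (card (balanced_vertices n m k \<sigma> A))"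
proof -
  let ?Q = "balanced_patterns n m k"
  have at_most_one: "(\<Sum>(D, F)\<in>?Q. of_bool (has_row_pattern n \<sigma> A i D F) :: real) =
      of_bool (\<exists>(D, F)\<in>?Q. has_row_pattern n \<sigma> A i D F)" if i: "i < m" for i
  proof (cases "\<exists>(D, F)\<in>?Q. has_row_pattern n \<sigma> A i D F")
    case True
    then obtain D F where DF: "(D, F) \<in> ?Q" "has_row_pattern n \<sigma> A i D F" by auto
    have "{(D', F') \<in> ?Q. has_row_pattern n \<sigma> A i D' F'} = {(D, F)}"
    proof (intro equalityI subsetI)
      fix q assume "q \<in> {(D', F') \<in> ?Q. has_row_pattern n \<sigma> A i D' F'}"
      then obtain D' F' where q: "q = (D', F')" "(D', F') \<in> ?Q" "has_row_pattern n \<sigma> A i D' F'"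
        by auto
      have "D = D' \<and> F = F'"
        using has_row_pattern_unique[OF \<sigma> _ DF(2) _ _ q(3)] i mn
          balanced_pattern_subset[OF DF(1) i mn] balanced_pattern_subset[OF q(2) i mn]
        by auto
      then show "q \<in> {(D, F)}" using q by simp
    qed (use DF in auto)
    then have "(\<Sum>(D, F)\<in>?Q. of_bool (has_row_pattern n \<sigma> A i D F) :: real) = 1"
      by (simp add: case_prod_unfold Int_def conj_commute)
    then show ?thesis using True by simp
  qed (auto intro!: sum.neutral)
  have "balanced_count n m k \<sigma> A = (\<Sum>i<m. \<Sum>(D, F)\<in>?Q. of_bool (has_row_pattern n \<sigma> A i D F))"
    unfolding balanced_count_def by (subst sum.cartesian_product) (simp add: case_prod_unfold)
  also have "\<dots> = (\<Sum>i<m. of_bool (i \<in> balanced_vertices n m k \<sigma> A))"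
    by (intro sum.cong refl) (simp add: at_most_one balanced_vertices_def)
  also have "\<dots> = real (card (balanced_vertices n m k \<sigma> A))"
    by (simp add: balanced_vertices_def Int_def conj_commute)
  finally show ?thesis .
qed

lemma cbm_lik_split:
  assumes i: "i < n" and A: "A \<in> observations n"
  shows "cbm_lik n p \<epsilon> \<sigma> A =
           (\<Prod>j\<in>{..<n} - {i}. pair_lik p \<epsilon> (\<sigma> i * \<sigma> j) (A i j)) *
           (\<Prod>e\<in>{e \<in> upper_pairs n. fst e \<noteq> i \<and> snd e \<noteq> i}.
              pair_lik p \<epsilon> (\<sigma> (fst e) * \<sigma> (snd e)) (A (fst e) (snd e)))"
proof -
  have "pair_lik p \<epsilon> (\<sigma> (min i j) * \<sigma> (max i j)) (A (min i j) (max i j)) = pair_lik p \<epsilon> (\<sigma> i * \<sigma> j) (A i j)" for j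
    using A by (cases "i \<le> j") (auto simp: observations_def min_def max_def mult.commute)
  then show ?thesis
    by (simp add: cbm_lik_upper_pairs prod_upper_pairs_split[OF i])
qed

lemma has_row_pattern_flip_other:
  assumes "j \<noteq> i" "i \<notin> D"
  shows "has_row_pattern n (flip i \<sigma>) A j D F \<longleftrightarrow> has_row_pattern n \<sigma> A j D F"
proof -
  have "row_pattern (flip i \<sigma>) j D F l = row_pattern \<sigma> j D F l" for l
    using assms by (auto simp: row_pattern_def flip_def)
  then show ?thesis by (simp add: has_row_pattern_def)
qed

text \<open>Flipping the sign of a vertex whose row is balanced swaps the roles of correct and flipped
  labels on its row; as \<open>card F = card (D - F)\<close> this leaves the likelihood and the set of balanced
  vertices unchanged.\<close>
context
  fixes n m k :: nat and \<sigma> A i D F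
  assumes \<sigma>: "\<sigma> \<in> sign_vectors n" and mn: "m \<le> n" and A: "A \<in> observations n"
    and i: "i < m" and DF: "(D, F) \<in> balanced_patterns n m k" and row: "has_row_pattern n \<sigma> A i D F"
begin

lemma balanced_pattern_facts:
  "i < n" "D \<subseteq> {..<n} - {i}" "F \<subseteq> D" "card F = k" "card (D - F) = k"
proof -
  show "i < n" "D \<subseteq> {..<n} - {i}" "F \<subseteq> D" "card F = k"
    using i mn DF by (auto simp: balanced_patterns_def)
  moreover have "finite F"
    using calculation(2,3) by (meson finite_Diff finite_lessThan finite_subset)
  ultimately show "card (D - F) = k"
    using DF by (simp add: balanced_patterns_def card_Diff_subset)
qed

lemma has_row_pattern_flip_self: "has_row_pattern n (flip i \<sigma>) A i D (D - F)"
proof -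
  have "row_pattern (flip i \<sigma>) i D (D - F) l = row_pattern \<sigma> i D F l" for l
    using balanced_pattern_facts(2,3) by (cases "l = i") (auto simp: row_pattern_def flip_def)
  then show ?thesis using row by (simp add: has_row_pattern_def)
qed

lemma cbm_lik_flip: "cbm_lik n p \<epsilon> (flip i \<sigma>) A = cbm_lik n p \<epsilon> \<sigma> A"
proof -
  note facts = balanced_pattern_facts
  have Aij: "A i j = row_pattern \<sigma> i D F j" if "j \<in> {..<n} - {i}" for j
    using row that by (simp add: has_row_pattern_def)
  have "(\<Prod>j\<in>{..<n} - {i}. pair_lik p \<epsilon> (flip i \<sigma> i * flip i \<sigma> j) (A i j)) =
      (\<Prod>j\<in>{..<n} - {i}. pair_lik p \<epsilon> (\<sigma> i * \<sigma> j) (row_pattern \<sigma> i D (D - F) j))"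
  proof (intro prod.cong refl)
    fix j assume j: "j \<in> {..<n} - {i}"
    then have "flip i \<sigma> i * flip i \<sigma> j = - (\<sigma> i * \<sigma> j)" by (simp add: flip_def)
    moreover have "- row_pattern \<sigma> i D F j = row_pattern \<sigma> i D (D - F) j"
      by (auto simp: row_pattern_def)
    ultimately show "pair_lik p \<epsilon> (flip i \<sigma> i * flip i \<sigma> j) (A i j) =
        pair_lik p \<epsilon> (\<sigma> i * \<sigma> j) (row_pattern \<sigma> i D (D - F) j)"
      using j Aij pair_lik_uminus sign_vectors_mult_cases[OF \<sigma> facts(1)] by auto
  qed
  also have "\<dots> = (\<Prod>j\<in>{..<n} - {i}. pair_lik p \<epsilon> (\<sigma> i * \<sigma> j) (row_pattern \<sigma> i D F j))"
    using facts by (simp add: prod_pair_lik_row_pattern[OF \<sigma>] Diff_Diff_Int Int_absorb1)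
  also have "\<dots> = (\<Prod>j\<in>{..<n} - {i}. pair_lik p \<epsilon> (\<sigma> i * \<sigma> j) (A i j))"
    using Aij by simp
  moreover have "(\<Prod>e\<in>{e \<in> upper_pairs n. fst e \<noteq> i \<and> snd e \<noteq> i}.
        pair_lik p \<epsilon> (flip i \<sigma> (fst e) * flip i \<sigma> (snd e)) (A (fst e) (snd e))) =
      (\<Prod>e\<in>{e \<in> upper_pairs n. fst e \<noteq> i \<and> snd e \<noteq> i}.
        pair_lik p \<epsilon> (\<sigma> (fst e) * \<sigma> (snd e)) (A (fst e) (snd e)))"
    by (intro prod.cong refl) (auto simp: flip_def)
  ultimately show ?thesis
    by (simp only: cbm_lik_split[OF facts(1) A])
qed

lemma balanced_vertices_flip: "balanced_vertices n m k (flip i \<sigma>) A = balanced_vertices n m k \<sigma> A"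
proof -
  have "(D, D - F) \<in> balanced_patterns n m k"
    using DF balanced_pattern_facts by (auto simp: balanced_patterns_def)
  then have "i \<in> balanced_vertices n m k (flip i \<sigma>) A"
    using i has_row_pattern_flip_self by (force simp: balanced_vertices_def)
  moreover have "i \<in> balanced_vertices n m k \<sigma> A"
    using i DF row by (force simp: balanced_vertices_def)
  moreover have "j \<in> balanced_vertices n m k (flip i \<sigma>) A \<longleftrightarrow> j \<in> balanced_vertices n m k \<sigma> A"
    if "j \<noteq> i" for j
  proof -
    have "has_row_pattern n (flip i \<sigma>) A j D' F' \<longleftrightarrow> has_row_pattern n \<sigma> A j D' F'"
      if "(D', F') \<in> balanced_patterns n m k" for D' F'
      using that i by (intro has_row_pattern_flip_other[OF \<open>j \<noteq> i\<close>]) (auto simp: balanced_patterns_def)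
    then show ?thesis by (auto simp: balanced_vertices_def)
  qed
  ultimately show ?thesis by (metis set_eqI)
qed

end

lemma balanced_vertex_flip_invariant:
  assumes \<sigma>: "\<sigma> \<in> sign_vectors n" and mn: "m \<le> n" and A: "A \<in> observations n"
    and i: "i \<in> balanced_vertices n m k \<sigma> A"
  shows "flip i \<sigma> \<in> sign_vectors n"
    and "balanced_vertices n m k (flip i \<sigma>) A = balanced_vertices n m k \<sigma> A"
    and "cbm_lik n p \<epsilon> (flip i \<sigma>) A = cbm_lik n p \<epsilon> \<sigma> A"
proof -
  obtain D F where "i < m" "(D, F) \<in> balanced_patterns n m k" "has_row_pattern n \<sigma> A i D F"
    using i by (auto simp: balanced_vertices_def)
  then show "balanced_vertices n m k (flip i \<sigma>) A = balanced_vertices n m k \<sigma> A"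
    and "cbm_lik n p \<epsilon> (flip i \<sigma>) A = cbm_lik n p \<epsilon> \<sigma> A"
    by (rule balanced_vertices_flip[OF \<sigma> mn A], rule cbm_lik_flip[OF \<sigma> mn A])
  show "flip i \<sigma> \<in> sign_vectors n"
    using flip_in_sign_vectors[OF \<sigma>] i mn by (auto simp: balanced_vertices_def)
qed

section \<open>Bounding the success probability\<close>

lemma sign_vectors_eq_image:
  "sign_vectors n = (\<lambda>x i. if i < n then x i else 1) ` PiE {..<n} (\<lambda>_. {1, -1})"
proof (intro equalityI subsetI)
  fix \<sigma> assume \<sigma>: "\<sigma> \<in> sign_vectors n"
  show "\<sigma> \<in> (\<lambda>x i. if i < n then x i else 1) ` PiE {..<n} (\<lambda>_. {1, -1})"
  proof (rule image_eqI[of _ _ "restrict \<sigma> {..<n}"])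
    show "\<sigma> = (\<lambda>i. if i < n then restrict \<sigma> {..<n} i else 1)"
      using \<sigma> by (auto simp: sign_vectors_def)
    show "restrict \<sigma> {..<n} \<in> PiE {..<n} (\<lambda>_. {1, -1})"
      using \<sigma> by (auto simp: sign_vectors_def)
  qed
qed (auto simp: sign_vectors_def PiE_def Pi_def)

lemma finite_sign_vectors [simp]: "finite (sign_vectors n)"
  unfolding sign_vectors_eq_image by (intro finite_imageI finite_PiE) auto

lemma card_sign_vectors_le: "card (sign_vectors n) \<le> 2 ^ n"
proof -
  have "card (sign_vectors n) \<le> card (PiE {..<n} (\<lambda>_. {1::int, -1}))"
    unfolding sign_vectors_eq_image by (intro card_image_le finite_PiE) auto
  also have "\<dots> = 2 ^ n" by (simp add: card_PiE numeral_2_eq_2)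
  finally show ?thesis .
qed

definition recovers :: "nat \<Rightarrow> (nat \<Rightarrow> nat \<Rightarrow> real) \<Rightarrow> (nat \<Rightarrow> int) \<Rightarrow> bool" where
  "recovers n Y \<sigma> \<longleftrightarrow> (\<forall>i<n. \<forall>j<n. Y i j = real_of_int (\<sigma> i * \<sigma> j))"

text \<open>The entry \<open>Y i l\<close> would have to equal both \<open>- \<sigma> i \<sigma> l\<close> and \<open>\<sigma> i \<sigma> l\<close>.\<close>
lemma not_recovers_two_flips:
  assumes \<sigma>: "\<sigma> \<in> sign_vectors n" and "i < n" "l < n" "i \<noteq> j" "i \<noteq> l" "j \<noteq> l"
    and "recovers n Y (flip i \<sigma>)" "recovers n Y (flip j \<sigma>)"
  shows False
proof -
  have "Y i l = real_of_int (flip i \<sigma> i * flip i \<sigma> l)" "Y i l = real_of_int (flip j \<sigma> i * flip j \<sigma> l)"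
    using assms(2,3,7,8) unfolding recovers_def by blast+
  then have "Y i l = - real_of_int (\<sigma> i * \<sigma> l)" "Y i l = real_of_int (\<sigma> i * \<sigma> l)"
    using assms(4-6) by (simp_all add: flip_def)
  then show False
    using sign_vectors_mult_cases[OF \<sigma> \<open>i < n\<close> \<open>l < n\<close>] by auto
qed

lemma card_flips_recovering_le:
  assumes \<sigma>: "\<sigma> \<in> sign_vectors n" and S: "S \<subseteq> {..<n}"
  shows "card {i \<in> S. recovers n Y (flip i \<sigma>)} \<le> 2"
proof (rule ccontr)
  assume "\<not> ?thesis"
  then obtain T where T: "T \<subseteq> {i \<in> S. recovers n Y (flip i \<sigma>)}" "card T = 3"
    by (metis not_less_eq_eq numeral_2_eq_2 numeral_3_eq_3 obtain_subset_with_card_n)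
  then obtain i j l where "T = {i, j, l}" "i \<noteq> j" "j \<noteq> l" "i \<noteq> l"
    by (auto simp: card_3_iff)
  then show False
    using T S not_recovers_two_flips[OF \<sigma>, of i l j Y] by auto
qed

text \<open>The map \<open>(\<sigma>, i) \<mapsto> (flip i \<sigma>, i)\<close> is an involution of \<open>Sigma S Z\<close>.\<close>
lemma sum_flip_reindex:
  assumes "finite S" "\<And>\<sigma>. \<sigma> \<in> S \<Longrightarrow> finite (Z \<sigma>)"
    and "\<And>\<sigma> i. \<sigma> \<in> S \<Longrightarrow> i \<in> Z \<sigma> \<Longrightarrow> flip i \<sigma> \<in> S \<and> Z (flip i \<sigma>) = Z \<sigma> \<and> f (flip i \<sigma>) = f \<sigma>"
  shows "(\<Sum>\<sigma>\<in>S. \<Sum>i\<in>Z \<sigma>. f \<sigma> * g \<sigma>) = (\<Sum>\<sigma>\<in>S. \<Sum>i\<in>Z \<sigma>. f \<sigma> * g (flip i \<sigma>) :: real)"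
proof -
  have "(\<Sum>\<sigma>\<in>S. \<Sum>i\<in>Z \<sigma>. f \<sigma> * g \<sigma>) = (\<Sum>(\<sigma>, i)\<in>Sigma S Z. f \<sigma> * g \<sigma>)"
    using assms(1,2) by (subst sum.Sigma) auto
  also have "\<dots> = (\<Sum>(\<sigma>, i)\<in>Sigma S Z. f \<sigma> * g (flip i \<sigma>))"
    by (rule sum.reindex_bij_witness[where i = "\<lambda>(\<sigma>, i). (flip i \<sigma>, i)" and j = "\<lambda>(\<sigma>, i). (flip i \<sigma>, i)"])
       (auto simp: assms(3))
  also have "\<dots> = (\<Sum>\<sigma>\<in>S. \<Sum>i\<in>Z \<sigma>. f \<sigma> * g (flip i \<sigma>))"
    using assms(1,2) by (subst sum.Sigma) auto
  finally show ?thesis .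
qed

text \<open>The likelihood of \<open>\<sigma>\<close> is shared equally among \<open>\<sigma>\<close> and its flips at the \<open>Z\<close> balanced
  vertices, which have the same likelihood; of these \<open>1 + Z\<close> sign vectors at most three are
  recovered by any fixed \<open>Y\<close>.\<close>
lemma recovery_mass_le:
  assumes A: "A \<in> observations n" and mn: "m \<le> n"
    and p: "0 \<le> p" "p \<le> 1" and \<epsilon>: "0 \<le> \<epsilon>" "\<epsilon> \<le> 1"
  shows "(\<Sum>\<sigma>\<in>sign_vectors n. cbm_lik n p \<epsilon> \<sigma> A * of_bool (recovers n Y \<sigma>)) \<le>
           3 * (\<Sum>\<sigma>\<in>sign_vectors n. cbm_lik n p \<epsilon> \<sigma> A / (1 + balanced_count n m k \<sigma> A))"
proof -
  let ?S = "sign_vectors n"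
  let ?Z = "\<lambda>\<sigma>. balanced_vertices n m k \<sigma> A"
  let ?r = "\<lambda>\<sigma>. of_bool (recovers n Y \<sigma>) :: real"
  define f where "f \<sigma> = cbm_lik n p \<epsilon> \<sigma> A / (1 + real (card (?Z \<sigma>)))" for \<sigma>
  have f_nonneg: "0 \<le> f \<sigma>" for \<sigma>
    unfolding f_def using cbm_lik_nonneg[OF p \<epsilon>] by simp
  have Z_sub: "?Z \<sigma> \<subseteq> {..<n}" for \<sigma>
    using mn by (auto simp: balanced_vertices_def)
  then have Z_fin: "finite (?Z \<sigma>)" for \<sigma>
    using finite_subset by blast
  have flip_invariant: "flip i \<sigma> \<in> ?S \<and> ?Z (flip i \<sigma>) = ?Z \<sigma> \<and> f (flip i \<sigma>) = f \<sigma>"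
    if "\<sigma> \<in> ?S" "i \<in> ?Z \<sigma>" for \<sigma> i
    using balanced_vertex_flip_invariant[OF that(1) mn A that(2)] by (simp add: f_def)
  have lik: "cbm_lik n p \<epsilon> \<sigma> A * ?r \<sigma> = f \<sigma> * ?r \<sigma> + (\<Sum>i\<in>?Z \<sigma>. f \<sigma> * ?r \<sigma>)" for \<sigma>
  proof -
    have "1 + real (card (?Z \<sigma>)) > 0" by simp
    then have "cbm_lik n p \<epsilon> \<sigma> A = f \<sigma> * (1 + real (card (?Z \<sigma>)))"
      by (simp add: f_def)
    then show ?thesis by (simp add: algebra_simps)
  qed
  have flips: "(\<Sum>i\<in>?Z \<sigma>. f \<sigma> * ?r (flip i \<sigma>)) \<le> 2 * f \<sigma>" if \<sigma>: "\<sigma> \<in> ?S" for \<sigma>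
  proof -
    have "(\<Sum>i\<in>?Z \<sigma>. f \<sigma> * ?r (flip i \<sigma>)) = f \<sigma> * real (card {i \<in> ?Z \<sigma>. recovers n Y (flip i \<sigma>)})"
      by (simp add: sum_distrib_left[symmetric] Z_fin Int_def conj_commute)
    also have "\<dots> \<le> f \<sigma> * 2"
      using card_flips_recovering_le[OF \<sigma> Z_sub] f_nonneg by (intro mult_left_mono) auto
    finally show ?thesis by simp
  qed
  have "(\<Sum>\<sigma>\<in>?S. cbm_lik n p \<epsilon> \<sigma> A * ?r \<sigma>) =
      (\<Sum>\<sigma>\<in>?S. f \<sigma> * ?r \<sigma>) + (\<Sum>\<sigma>\<in>?S. \<Sum>i\<in>?Z \<sigma>. f \<sigma> * ?r \<sigma>)"
    by (simp add: lik sum.distrib)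
  also have "\<dots> = (\<Sum>\<sigma>\<in>?S. f \<sigma> * ?r \<sigma>) + (\<Sum>\<sigma>\<in>?S. \<Sum>i\<in>?Z \<sigma>. f \<sigma> * ?r (flip i \<sigma>))"
    using Z_fin flip_invariant by (subst sum_flip_reindex) auto
  also have "\<dots> \<le> (\<Sum>\<sigma>\<in>?S. f \<sigma>) + (\<Sum>\<sigma>\<in>?S. 2 * f \<sigma>)"
    using f_nonneg flips by (intro add_mono sum_mono) auto
  also have "\<dots> = 3 * (\<Sum>\<sigma>\<in>?S. f \<sigma>)"
    by (simp add: sum_distrib_left[symmetric])
  also have "\<dots> = 3 * (\<Sum>\<sigma>\<in>?S. cbm_lik n p \<epsilon> \<sigma> A / (1 + balanced_count n m k \<sigma> A))"
    by (simp add: f_def balanced_count_eq_card[OF _ mn])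
  finally show ?thesis .
qed

lemma success_prob_le:
  assumes p: "0 < p" "p < 1" and \<epsilon>: "0 \<le> \<epsilon>" "\<epsilon> \<le> 1" and mn: "m \<le> n"
    and \<mu>: "0 < real m * real (card (balanced_patterns n m k)) * pattern_prob n k p \<epsilon>"
  shows "success_prob n p \<epsilon> Y \<le>
           3 * (6 / (real m * real (card (balanced_patterns n m k)) * pattern_prob n k p \<epsilon>) + 4 * p / (1 - p))"
proof -
  let ?S = "sign_vectors n"
  let ?B = "6 / (real m * real (card (balanced_patterns n m k)) * pattern_prob n k p \<epsilon>) + 4 * p / (1 - p)"
  have "success_prob n p \<epsilon> Y =
      (1 / 2 ^ n) * (\<Sum>A\<in>observations n. \<Sum>\<sigma>\<in>?S. cbm_lik n p \<epsilon> \<sigma> A * of_bool (recovers n (Y A) \<sigma>))"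
    unfolding success_prob_def recovers_def
    by (subst sum.swap) (simp add: sum_distrib_left of_bool_def mult_ac)
  also have "\<dots> \<le> (1 / 2 ^ n) *
      (\<Sum>A\<in>observations n. 3 * (\<Sum>\<sigma>\<in>?S. cbm_lik n p \<epsilon> \<sigma> A / (1 + balanced_count n m k \<sigma> A)))"
    using p \<epsilon> by (intro mult_left_mono sum_mono recovery_mass_le[OF _ mn]) auto
  also have "\<dots> = 3 / 2 ^ n * (\<Sum>\<sigma>\<in>?S. cbm_expect n p \<epsilon> \<sigma> (\<lambda>A. 1 / (1 + balanced_count n m k \<sigma> A)))"
    unfolding cbm_expect_def by (subst sum.swap) (simp add: sum_distrib_left)
  also have "\<dots> \<le> 3 / 2 ^ n * (\<Sum>\<sigma>\<in>?S. ?B)"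
  proof (intro mult_left_mono sum_mono)
    fix \<sigma> assume \<sigma>: "\<sigma> \<in> ?S"
    have "cbm_expect n p \<epsilon> \<sigma> (balanced_count n m k \<sigma>) =
        real m * real (card (balanced_patterns n m k)) * pattern_prob n k p \<epsilon>"
      using cbm_expect_balanced_count[OF _ p(2) \<epsilon> mn \<sigma>] p by simp
    then show "cbm_expect n p \<epsilon> \<sigma> (\<lambda>A. 1 / (1 + balanced_count n m k \<sigma> A)) \<le> ?B"
      using cbm_expect_inverse_one_plus_le[where Z = "balanced_count n m k \<sigma>", OF \<sigma> _ p(2) \<epsilon> balanced_count_nonneg]
        cbm_expect_balanced_count_square[OF _ p(2) \<epsilon> mn \<sigma>, where k = k] p \<mu>
      by simp
  qed simp
  also have "\<dots> = 3 * (real (card ?S) / 2 ^ n) * ?B" by simp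
  also have "\<dots> \<le> 3 * 1 * ?B"
    using card_sign_vectors_le[of n] \<mu> p
    by (intro mult_right_mono mult_left_mono) (auto simp: field_simps)
  finally show ?thesis by simp
qed

section \<open>A lower bound for the expected number of balanced vertices\<close>

lemma fact_mult_exp_le: "fact d * exp (real d) \<le> (real d + 1) ^ (d + 1)"
proof (induction d)
  case (Suc d)
  have "1 \<le> (real d + 2) * ln ((real d + 2) / (real d + 1))"
    using ln_le_minus_one[of "(real d + 1) / (real d + 2)"]
    by (simp add: ln_div field_simps)
  then have "exp 1 \<le> exp (real (d + 2) * ln ((real d + 2) / (real d + 1)))"
    by (simp add: add.commute)
  also have "\<dots> = ((real d + 2) / (real d + 1)) ^ (d + 2)"
    by (subst exp_of_nat_mult) simp
  finally have e: "exp 1 * (real d + 1) ^ (d + 2) \<le> (real d + 2) ^ (d + 2)"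
    by (simp add: power_divide pos_le_divide_eq)
  have "fact (Suc d) * exp (real (Suc d)) = (real d + 1) * exp 1 * (fact d * exp (real d))"
    by (simp add: exp_add algebra_simps)
  also have "\<dots> \<le> (real d + 1) * exp 1 * (real d + 1) ^ (d + 1)"
    using Suc.IH by (intro mult_left_mono) auto
  also have "\<dots> \<le> (real d + 2) ^ (d + 2)"
    using e by (simp add: mult_ac)
  finally show ?case by (simp add: add.commute)
qed simp

lemma binomial_ge_exp:
  assumes "d \<le> N"
  shows "(real N - real d) ^ d * exp (real d) / (real d + 1) ^ (d + 1) \<le> real (N choose d)"
proof -
  have "(real N - real d) ^ d = (\<Prod>i = 0..<d. real N - real d)" by simp
  also have "\<dots> \<le> (\<Prod>i = 0..<d. real N - of_nat i)"
    using assms by (intro prod_mono) auto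
  also have "\<dots> = real (N choose d) * fact d"
    by (simp add: binomial_gbinomial gbinomial_mult_fact')
  finally have "(real N - real d) ^ d * exp (real d) \<le> real (N choose d) * (fact d * exp (real d))"
    by (simp add: mult_right_mono mult.assoc)
  also have "\<dots> \<le> real (N choose d) * (real d + 1) ^ (d + 1)"
    by (intro mult_left_mono fact_mult_exp_le) auto
  finally show ?thesis by (simp add: divide_le_eq)
qed

lemma central_binomial_ge: "4 ^ k / (2 * real k + 1) \<le> real ((2 * k) choose k)"
proof (cases "k = 0")
  case False
  then have "4 ^ k / (2 * real k + 1) \<le> 4 ^ k / (2 * real k)"
    by (intro divide_left_mono) auto
  also have "\<dots> \<le> real ((2 * k) choose k)"
    using False by (intro central_binomial_lower_bound) auto
  finally show ?thesis .
qed simp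

text \<open>Here \<open>(2 sqrt(\<epsilon> (1 - \<epsilon>)) p) ^ (2 k) = 4 ^ k (p \<epsilon>) ^ k (p (1 - \<epsilon>)) ^ k\<close> absorbs the
  central binomial coefficient.\<close>
lemma card_balanced_patterns_mult_pattern_prob_ge:
  assumes p: "0 \<le> p" "p \<le> 1" and \<epsilon>: "0 \<le> \<epsilon>" "\<epsilon> \<le> 1" and mn: "m \<le> n" and k: "2 * k \<le> n - m"
  defines "d \<equiv> real (2 * k)"
  shows "((real (n - m) - d) * p * (2 * sqrt (\<epsilon> * (1 - \<epsilon>))) / (d + 1)) ^ (2 * k) * exp d * (1 - p) ^ n
           / (d + 1)\<^sup>2 \<le> real (card (balanced_patterns n m k)) * pattern_prob n k p \<epsilon>"
proof -
  let ?N = "n - m" and ?s = "2 * sqrt (\<epsilon> * (1 - \<epsilon>))"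
  have "(p * ?s)\<^sup>2 = p\<^sup>2 * 4 * (sqrt (\<epsilon> * (1 - \<epsilon>)))\<^sup>2"
    by (simp add: power_mult_distrib)
  also have "\<dots> = 4 * ((p * \<epsilon>) * (p * (1 - \<epsilon>)))"
    using \<epsilon> by (subst real_sqrt_pow2) (auto simp: power2_eq_square)
  finally have "((p * ?s)\<^sup>2) ^ k = 4 ^ k * ((p * \<epsilon>) ^ k * (p * (1 - \<epsilon>)) ^ k)"
    by (simp only: power_mult_distrib)
  then have "(p * ?s) ^ (2 * k) = 4 ^ k * ((p * \<epsilon>) ^ k * (p * (1 - \<epsilon>)) ^ k)"
    by (simp only: power_mult)
  moreover have "(p * \<epsilon>) ^ k * (p * (1 - \<epsilon>)) ^ k * (1 - p) ^ n \<le> pattern_prob n k p \<epsilon>"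
    unfolding pattern_prob_def using p \<epsilon> by (intro mult_left_mono power_decreasing) auto
  ultimately have "(real ?N - d) ^ (2 * k) * exp d / (d + 1) ^ (2 * k + 1) * (4 ^ k / (d + 1)) *
        ((p * \<epsilon>) ^ k * (p * (1 - \<epsilon>)) ^ k * (1 - p) ^ n)
      \<le> real (?N choose (2 * k)) * real ((2 * k) choose k) * pattern_prob n k p \<epsilon>"
    using binomial_ge_exp[OF k] central_binomial_ge[of k] p \<epsilon> k
    by (intro mult_mono) (auto simp: d_def)
  moreover have "((real ?N - d) * p * ?s / (d + 1)) ^ (2 * k) * exp d * (1 - p) ^ n / (d + 1)\<^sup>2 =
      (real ?N - d) ^ (2 * k) * exp d / (d + 1) ^ (2 * k + 1) * (4 ^ k / (d + 1)) *
        ((p * \<epsilon>) ^ k * (p * (1 - \<epsilon>)) ^ k * (1 - p) ^ n)"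
  proof -
    define c q r D where "c = real ?N - d" and "q = (p * \<epsilon>) ^ k * (p * (1 - \<epsilon>)) ^ k"
      and "r = exp d * (1 - p) ^ n" and "D = d + 1"
    have "D > 0" by (simp add: D_def d_def)
    have "(c * p * ?s / D) ^ (2 * k) = c ^ (2 * k) * (4 ^ k * q) / D ^ (2 * k)"
      using \<open>(p * ?s) ^ (2 * k) = _\<close> by (simp add: power_divide power_mult_distrib q_def mult.assoc)
    then have "(c * p * ?s / D) ^ (2 * k) * r / D\<^sup>2 = c ^ (2 * k) / D ^ (2 * k + 1) * (4 ^ k / D) * (q * r)"
      using \<open>D > 0\<close> by (simp add: power2_eq_square field_simps)
    then show ?thesis by (simp add: c_def q_def r_def D_def mult_ac)
  qed
  ultimately show ?thesis
    by (simp add: card_balanced_patterns[OF mn])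
qed

lemma exp_le_one_minus_power:
  fixes y :: real
  assumes "0 \<le> y" "y \<le> 1 / 2"
  shows "exp (- (real d * (y + 2 * y\<^sup>2))) \<le> (1 - y) ^ d"
proof -
  have "- y - 2 * y\<^sup>2 \<le> ln (1 - y)"
    using assms by (intro ln_one_minus_pos_lower_bound) auto
  then have "real d * (- y - 2 * y\<^sup>2) \<le> real d * ln (1 - y)"
    by (rule mult_left_mono) simp
  then have "exp (- (real d * (y + 2 * y\<^sup>2))) \<le> exp (real d * ln (1 - y))"
    by (simp add: algebra_simps)
  also have "\<dots> = (1 - y) ^ d"
    using assms by (simp add: exp_of_nat_mult)
  finally show ?thesis .
qed

lemma real_div_nat_ge:
  assumes "0 < M" "2 * M \<le> n"
  shows "real n / (2 * real M) \<le> real (n div M)"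
proof -
  have "n mod M < M"
    using assms(1) by simp
  then have "n < (n div M + 1) * M"
    using div_mult_mod_eq[of n M] unfolding distrib_right by linarith
  then have "real n < (real (n div M) + 1) * real M"
    by (metis of_nat_1 of_nat_add of_nat_less_iff of_nat_mult)
  moreover have "real n / (2 * real M) \<le> real n / real M - 1"
    using assms by (simp add: field_simps)
  ultimately show ?thesis
    using assms by (simp add: field_simps)
qed

lemma one_minus_three_div_le_ratio:
  fixes M x d t :: real
  assumes "6 \<le> M" "M \<le> x" "0 \<le> d" "d \<le> x" "(1 - 2 / M) * x \<le> t"
  shows "1 - 3 / M \<le> t / (d + 1)"
proof -
  have "0 \<le> 1 - 2 / M" using assms by (simp add: field_simps)
  have "1 - 3 / M \<le> (1 - 2 / M) * (1 - 1 / M)"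
    using assms by (simp add: field_simps)
  also have "\<dots> \<le> (1 - 2 / M) * (x / (x + 1))"
    using assms \<open>0 \<le> 1 - 2 / M\<close> by (intro mult_left_mono) (simp_all add: field_simps)
  also have "\<dots> \<le> (1 - 2 / M) * x / (d + 1)"
    using assms \<open>0 \<le> 1 - 2 / M\<close> by (simp add: frac_le)
  also have "\<dots> \<le> t / (d + 1)"
    using assms by (simp add: divide_right_mono)
  finally show ?thesis .
qed

lemma exp_le_power_of_ratio:
  fixes M x y t :: real
  assumes "6 \<le> M" "M \<le> x" "real d \<le> x" "real d \<le> y" "(1 - 2 / M) * x \<le> t"
  shows "exp (- (6 / M * y)) \<le> (t / (real d + 1)) ^ d"
proof -
  have "3 / M + 2 * (3 / M)\<^sup>2 \<le> 6 / M"
    using assms(1) by (simp add: field_simps power2_eq_square)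
  then have "real d * (3 / M + 2 * (3 / M)\<^sup>2) \<le> y * (6 / M)"
    using assms by (intro mult_mono) auto
  then have "exp (- (6 / M * y)) \<le> exp (- (real d * (3 / M + 2 * (3 / M)\<^sup>2)))"
    by (simp add: mult.commute)
  also have "\<dots> \<le> (1 - 3 / M) ^ d"
    using assms(1) by (intro exp_le_one_minus_power) (auto simp: field_simps)
  also have "\<dots> \<le> (t / (real d + 1)) ^ d"
    using one_minus_three_div_le_ratio[OF assms(1,2) _ assms(3,5)] assms(1)
    by (intro power_mono) (auto simp: field_simps)
  finally show ?thesis .
qed

lemma exp_le_one_minus_power_linear:
  assumes "0 \<le> p" "p \<le> 1 / 2" "2 * real n * p\<^sup>2 \<le> 1"
  shows "exp (- (real n * p) - 1) \<le> (1 - p) ^ n"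
proof -
  have "exp (- (real n * p) - 1) \<le> exp (- (real n * (p + 2 * p\<^sup>2)))"
    using assms(3) by (simp add: algebra_simps)
  also have "\<dots> \<le> (1 - p) ^ n"
    using assms by (intro exp_le_one_minus_power) auto
  finally show ?thesis .
qed

lemma real_two_nat_floor_half:
  fixes x :: real
  assumes "0 \<le> x"
  shows "x - 2 \<le> real (2 * nat \<lfloor>x / 2\<rfloor>)" "real (2 * nat \<lfloor>x / 2\<rfloor>) \<le> x"
  using assms by linarith+

lemma real_diff_div_ge:
  assumes "0 < M" "d \<le> real n / real M"
  shows "real n * (1 - 2 / real M) \<le> real (n - n div M) - d"
proof -
  have "real (n div M) \<le> real n / real M"
    by (rule of_nat_div_le_of_nat)
  moreover have "real n * (1 - 2 / real M) = real n - 2 * (real n / real M)"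
    by (simp add: algebra_simps)
  ultimately show ?thesis
    using assms by (simp add: of_nat_diff)
qed

lemma sqrt_mult_one_minus_le: "0 \<le> \<epsilon> \<Longrightarrow> \<epsilon> \<le> 1 \<Longrightarrow> 2 * sqrt (\<epsilon> * (1 - \<epsilon>)) \<le> 1"
proof -
  have "\<epsilon> * (1 - \<epsilon>) \<le> (1 / 2)\<^sup>2"
    using zero_le_power2[of "\<epsilon> - 1 / 2"] by (simp add: power2_eq_square algebra_simps)
  then have "sqrt (\<epsilon> * (1 - \<epsilon>)) \<le> sqrt ((1 / 2)\<^sup>2)"
    by (rule real_sqrt_le_mono)
  then show ?thesis by simp
qed

lemma balanced_count_mean_ge:
  fixes a \<epsilon> s g :: real and M n :: nat
  assumes a: "0 < a" and \<epsilon>: "0 \<le> \<epsilon>" "\<epsilon> \<le> 1" and s: "s = 2 * sqrt (\<epsilon> * (1 - \<epsilon>))"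
    and g: "g = (1 - a + a * s) / 2" and Mg: "6 * a / real M \<le> g" and M: "6 \<le> M"
    and n: "3 \<le> n" "2 * M \<le> n"
    and pM: "a * ln (real n) / real n \<le> 1 / real M"
    and p2: "2 * a\<^sup>2 * (ln (real n))\<^sup>2 / real n \<le> 1"
    and sM: "0 < s \<Longrightarrow> real M \<le> a * s * ln (real n)"
  defines "k \<equiv> nat \<lfloor>a * s * ln (real n) / 2\<rfloor>" and "p \<equiv> a * ln (real n) / real n"
  shows "exp (-3) / (2 * real M) * real n powr g / (a * ln (real n) + 1)\<^sup>2 \<le>
           real (n div M) * real (card (balanced_patterns n (n div M) k)) * pattern_prob n k p \<epsilon>"
proof -
  define L m d where "L = ln (real n)" and "m = n div M" and "d = real (2 * k)"
  define X where "X = (real (n - m) - d) * p * s / (d + 1)"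
  have "exp 1 \<le> real n" using exp_le n(1) by linarith
  then have L: "1 \<le> L" using n by (simp add: L_def ln_ge_iff)
  have s01: "0 \<le> s" "s \<le> 1" using s sqrt_mult_one_minus_le[OF \<epsilon>] \<epsilon> by auto
  have "a * s * L - 2 \<le> d" "d \<le> a * s * L"
    using real_two_nat_floor_half[of "a * s * L"] a s01 L by (simp_all add: d_def k_def L_def)
  moreover have "a * s * L \<le> a * L"
    using mult_left_le[OF s01(2), of a] a L by (intro mult_right_mono) auto
  ultimately have d: "a * s * L - 2 \<le> d" "d \<le> a * s * L" "d \<le> a * L"
    by linarith+
  have Mpos: "6 \<le> real M" using M by simp
  have "1 / real M \<le> 1 / 2" using Mpos by simp
  then have p: "0 < p" "p \<le> 1 / 2" "real n * p = a * L"
    using pM a L n unfolding p_def L_def by (simp, linarith, simp)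
  have "a * L \<le> real n / real M" using pM Mpos n by (simp add: L_def field_simps)
  then have dn: "d \<le> real n / real M" using d(3) by linarith
  have Nd: "real n * (1 - 2 / real M) \<le> real (n - m) - d"
    unfolding m_def using dn Mpos by (intro real_diff_div_ge) auto
  moreover have "0 \<le> real n * (1 - 2 / real M)"
    using Mpos by (intro mult_nonneg_nonneg) simp_all
  ultimately have k: "2 * k \<le> n - m"
    by (simp add: d_def)
  have X: "exp (- (6 * a / real M * L)) \<le> X ^ (2 * k)"
  proof (cases "s = 0")
    case False
    have "(1 - 2 / real M) * (a * s * L) = (1 - 2 / real M) * s * (real n * p)"
      by (simp only: p(3)) (simp add: algebra_simps)
    also have "\<dots> = real n * (1 - 2 / real M) * (p * s)"
      by (simp add: algebra_simps)
    also have "\<dots> \<le> (real (n - m) - d) * (p * s)"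
      using Nd p s01 by (intro mult_right_mono) auto
    also have "\<dots> = (real (n - m) - d) * p * s"
      by (simp add: mult.assoc)
    finally have "exp (- (6 / real M * (a * L))) \<le> X ^ (2 * k)"
      unfolding X_def d_def using sM False s01 d Mpos
      by (intro exp_le_power_of_ratio) (auto simp: d_def L_def)
    then show ?thesis by (simp add: mult.assoc)
  qed (use a L in \<open>simp add: k_def\<close>)
  have P: "exp (- (a * L) - 1) \<le> (1 - p) ^ n"
    using exp_le_one_minus_power_linear[of p n] p p2 n
    by (simp add: p_def L_def power2_eq_square field_simps)
  have "exp (-3) / (2 * real M) * real n powr g / (a * L + 1)\<^sup>2 \<le>
      real n / (2 * real M) * (exp (- (6 * a / real M * L)) * exp (a * s * L - 2) * exp (- (a * L) - 1)) / (a * L + 1)\<^sup>2"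
  proof -
    have "2 * (g * L) = L + a * s * L - a * L"
      by (simp add: g field_simps)
    moreover have "6 * a / real M * L \<le> g * L"
      using Mg L by (intro mult_right_mono) auto
    ultimately have "exp (-3) * exp (g * L) \<le> exp L * (exp (- (6 * a / real M * L)) * exp (a * s * L - 2) * exp (- (a * L) - 1))"
      by (simp flip: exp_add)
    moreover have "real n powr g = exp (g * L)" "real n = exp L"
      using n by (simp_all add: L_def powr_def)
    ultimately show ?thesis
      using Mpos by (intro divide_right_mono) (simp_all add: field_simps)
  qed
  also have "\<dots> \<le> real m * (X ^ (2 * k) * exp d * (1 - p) ^ n) / (d + 1)\<^sup>2"
  proof (rule frac_le)
    show "real n / (2 * real M) * (exp (- (6 * a / real M * L)) * exp (a * s * L - 2) * exp (- (a * L) - 1))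
        \<le> real m * (X ^ (2 * k) * exp d * (1 - p) ^ n)"
      using real_div_nat_ge[of M n] M n X P d(1) by (intro mult_mono) (auto simp: m_def)
    show "(d + 1)\<^sup>2 \<le> (a * L + 1)\<^sup>2"
      using d(3) by (intro power_mono) (auto simp: d_def)
  qed (use X p in \<open>auto simp: d_def intro!: mult_nonneg_nonneg intro: order_trans[OF exp_ge_zero]\<close>)
  also have "\<dots> = real m * (X ^ (2 * k) * exp d * (1 - p) ^ n / (d + 1)\<^sup>2)"
    by simp
  also have "\<dots> \<le> real m * (real (card (balanced_patterns n m k)) * pattern_prob n k p \<epsilon>)"
    using card_balanced_patterns_mult_pattern_prob_ge[OF _ _ \<epsilon> _ k, of p] p
    by (intro mult_left_mono) (simp_all add: X_def s d_def m_def)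
  finally show ?thesis by (simp add: L_def m_def mult.assoc)
qed

lemma success_prob_nonneg:
  "0 \<le> p \<Longrightarrow> p \<le> 1 \<Longrightarrow> 0 \<le> \<epsilon> \<Longrightarrow> \<epsilon> \<le> 1 \<Longrightarrow> 0 \<le> success_prob n p \<epsilon> Y"
  unfolding success_prob_def by (intro sum_nonneg mult_nonneg_nonneg cbm_lik_nonneg) auto

lemma sqrt_diff_square:
  assumes "0 \<le> \<epsilon>" "\<epsilon> \<le> 1"
  shows "(sqrt (1 - \<epsilon>) - sqrt \<epsilon>)\<^sup>2 = 1 - 2 * sqrt (\<epsilon> * (1 - \<epsilon>))"
  using assms by (simp add: power2_diff real_sqrt_mult mult.commute)

lemma success_prob_le_power:
  fixes a \<epsilon> s g :: real and M n :: nat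
  assumes a: "0 < a" and \<epsilon>: "0 \<le> \<epsilon>" "\<epsilon> \<le> 1" and s: "s = 2 * sqrt (\<epsilon> * (1 - \<epsilon>))"
    and g: "g = (1 - a + a * s) / 2" and Mg: "6 * a / real M \<le> g" and M: "6 \<le> M"
    and n: "3 \<le> n" "2 * M \<le> n"
    and pM: "a * ln (real n) / real n \<le> 1 / real M"
    and p2: "2 * a\<^sup>2 * (ln (real n))\<^sup>2 / real n \<le> 1"
    and sM: "0 < s \<Longrightarrow> real M \<le> a * s * ln (real n)"
  defines "p \<equiv> a * ln (real n) / real n" and "C \<equiv> exp (-3) / (2 * real M)"
  shows "0 \<le> success_prob n p \<epsilon> Y \<and>
           success_prob n p \<epsilon> Y \<le> 3 * (6 / C * ((a * ln (real n) + 1)\<^sup>2 / real n powr g) + 4 * p / (1 - p))"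
proof -
  define \<Phi> where "\<Phi> = C * real n powr g / (a * ln (real n) + 1)\<^sup>2"
  define k where "k = nat \<lfloor>a * s * ln (real n) / 2\<rfloor>"
  have "0 < ln (real n)" using n by simp
  have "p \<le> 1 / real M" "1 / real M < 1"
    using pM M by (simp_all add: p_def)
  then have p: "0 < p" "p < 1"
    using n a \<open>0 < ln (real n)\<close> by (simp add: p_def, linarith)
  have "0 < a * ln (real n) + 1"
    using a \<open>0 < ln (real n)\<close> by (intro add_pos_pos mult_pos_pos) auto
  then have "0 < \<Phi>"
    using M n unfolding \<Phi>_def C_def by (intro divide_pos_pos mult_pos_pos) auto
  moreover have "\<Phi> \<le> real (n div M) * real (card (balanced_patterns n (n div M) k)) * pattern_prob n k p \<epsilon>"
    unfolding \<Phi>_def C_def p_def k_def using assms by (intro balanced_count_mean_ge) auto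
  ultimately have "success_prob n p \<epsilon> Y \<le>
      3 * (6 / (real (n div M) * real (card (balanced_patterns n (n div M) k)) * pattern_prob n k p \<epsilon>)
           + 4 * p / (1 - p))"
    by (intro success_prob_le[OF p \<epsilon> div_le_dividend]) linarith
  also have "\<dots> \<le> 3 * (6 / \<Phi> + 4 * p / (1 - p))"
    using \<open>0 < \<Phi>\<close> \<open>\<Phi> \<le> _\<close> by (intro mult_left_mono add_right_mono divide_left_mono) auto
  also have "6 / \<Phi> = 6 / C * ((a * ln (real n) + 1)\<^sup>2 / real n powr g)"
    by (simp add: \<Phi>_def)
  finally show ?thesis
    using success_prob_nonneg[of p \<epsilon> n Y] p \<epsilon> by simp
qed

lemma success_prob_eventually_le:
  fixes a \<epsilon> :: real
  assumes a: "0 < a" and \<epsilon>: "0 \<le> \<epsilon>" "\<epsilon> \<le> 1" and below: "a * (sqrt (1 - \<epsilon>) - sqrt \<epsilon>)\<^sup>2 < 1"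
  obtains C g :: real where "0 < C" "0 < g"
    "\<forall>\<^sub>F n in sequentially. 0 \<le> success_prob n (a * ln (real n) / real n) \<epsilon> (Y n) \<and>
       success_prob n (a * ln (real n) / real n) \<epsilon> (Y n) \<le>
         3 * (6 / C * ((a * ln (real n) + 1)\<^sup>2 / real n powr g)
              + 4 * (a * ln (real n) / real n) / (1 - a * ln (real n) / real n))"
proof -
  define s g where "s = 2 * sqrt (\<epsilon> * (1 - \<epsilon>))" and "g = (1 - a + a * s) / 2"
  define M :: nat where "M = nat \<lceil>6 * a / g\<rceil> + 6"
  have g: "0 < g"
    using below by (simp add: sqrt_diff_square[OF \<epsilon>] s_def g_def algebra_simps)
  have M: "6 \<le> M" "6 * a / real M \<le> g"
  proof -
    show "6 \<le> M" by (simp add: M_def)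
    have "6 * a / g \<le> real M" unfolding M_def by linarith
    then have "6 * a \<le> g * real M" using g by (simp add: field_simps)
    moreover have "0 < real M" using \<open>6 \<le> M\<close> by simp
    ultimately show "6 * a / real M \<le> g" by (simp add: divide_le_eq)
  qed
  have "\<forall>\<^sub>F n in sequentially. 3 \<le> n \<and> 2 * M \<le> n"
    using eventually_ge_at_top[of "max 3 (2 * M)"] by (rule eventually_mono) auto
  moreover have "\<forall>\<^sub>F n in sequentially. a * ln (real n) / real n \<le> 1 / real M"
    using a M by real_asymp
  moreover have "\<forall>\<^sub>F n in sequentially. 2 * a\<^sup>2 * (ln (real n))\<^sup>2 / real n \<le> 1"
    using a by real_asymp
  moreover have "\<forall>\<^sub>F n in sequentially. 0 < s \<longrightarrow> real M \<le> a * s * ln (real n)"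
  proof (cases "0 < s")
    case True
    then have "\<forall>\<^sub>F n in sequentially. real M \<le> a * s * ln (real n)"
      using a by real_asymp
    then show ?thesis by (rule eventually_mono) simp
  qed simp
  ultimately have "\<forall>\<^sub>F n in sequentially. 0 \<le> success_prob n (a * ln (real n) / real n) \<epsilon> (Y n) \<and>
       success_prob n (a * ln (real n) / real n) \<epsilon> (Y n) \<le>
         3 * (6 / (exp (-3) / (2 * real M)) * ((a * ln (real n) + 1)\<^sup>2 / real n powr g)
              + 4 * (a * ln (real n) / real n) / (1 - a * ln (real n) / real n))"
    by eventually_elim (use success_prob_le_power[OF a \<epsilon> s_def g_def M(2,1)] in blast)
  moreover have "0 < exp (-3) / (2 * real M)" using M by simp
  ultimately show ?thesis using that g by blast
qed

lemma success_bound_tendsto_zero: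
  fixes a C g :: real
  assumes "0 < a" "0 < C" "0 < g"
  shows "(\<lambda>n. 3 * (6 / C * ((a * ln (real n) + 1)\<^sup>2 / real n powr g)
            + 4 * (a * ln (real n) / real n) / (1 - a * ln (real n) / real n))) \<longlonglongrightarrow> 0"
proof -
  have "(\<lambda>n. (a * ln (real n) + 1)\<^sup>2 / real n powr g) \<longlonglongrightarrow> 0"
    using assms by real_asymp
  moreover have "(\<lambda>n. a * ln (real n) / real n) \<longlonglongrightarrow> 0"
    using assms by real_asymp
  ultimately have "(\<lambda>n. 3 * (6 / C * ((a * ln (real n) + 1)\<^sup>2 / real n powr g)
            + 4 * (a * ln (real n) / real n) / (1 - a * ln (real n) / real n))) \<longlonglongrightarrow>
      3 * (6 / C * 0 + 4 * 0 / (1 - 0))"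
    by (intro tendsto_intros) simp_all
  then show ?thesis by simp
qed

theorem theorem7:
  fixes a \<epsilon> :: real
    and Yhat :: "nat \<Rightarrow> (nat \<Rightarrow> nat \<Rightarrow> int) \<Rightarrow> (nat \<Rightarrow> nat \<Rightarrow> real)"
  assumes "a > 0" and "0 \<le> \<epsilon>" and "\<epsilon> \<le> 1 / 2"
    and "a * (sqrt (1 - \<epsilon>) - sqrt \<epsilon>)\<^sup>2 < 1"
  shows "(\<lambda>n. success_prob n (a * ln (real n) / real n) \<epsilon> (Yhat n)) \<longlonglongrightarrow> 0"
proof -
  obtain C g where "0 < C" "0 < g" and bound:
    "\<forall>\<^sub>F n in sequentially. 0 \<le> success_prob n (a * ln (real n) / real n) \<epsilon> (Yhat n) \<and>
       success_prob n (a * ln (real n) / real n) \<epsilon> (Yhat n) \<le>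
         3 * (6 / C * ((a * ln (real n) + 1)\<^sup>2 / real n powr g)
              + 4 * (a * ln (real n) / real n) / (1 - a * ln (real n) / real n))"
    using success_prob_eventually_le[of a \<epsilon>] assms by auto
  show ?thesis
    using bound by (intro tendsto_sandwich[OF _ _ tendsto_const success_bound_tendsto_zero[OF \<open>a > 0\<close> \<open>0 < C\<close> \<open>0 < g\<close>]])
      (auto elim: eventually_mono)
qed

end
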